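(* Let $\mathcal{H}$ be a real Hilbert space, $\rho\in\mathbb{R}$, and let $\mathcal{A}:\mathcal{H}\to 2^{\mathcal{H}}$ be a maximally $\rho$-comonotone operator with $\mathrm{zer}\,\mathcal{A}:=\{x:0\in\mathcal{A}x\}\neq\emptyset$. Let $\eta>\max\{-2\rho,0\}$, $\beta>0$, $\alpha>\gamma+2$ and $\gamma>\frac{\beta}{2(\rho+\eta)}$. Given $x_0,x_{-1}\in\mathcal{H}$, define for $n\ge 1$ $$y_n=x_n+\Big(1-\frac{\alpha}{n}\Big)(x_n-x_{n-1}),\qquad z_n=x_n+\frac{n}{\gamma}(x_n-x_{n-1}),\qquad x_{n+1}=y_n-\frac{\beta}{n}\mathcal{A}_\eta(z_n).$$ Then: (i) $\sum_{n=1}^{+\infty} n\|x_n-x_{n-1}\|^2<+\infty$, $\sum_{n=1}^{+\infty} n\|\mathcal{A}_{\eta}(z_{n})\|^2<+\infty$ and $\sum_{n=1}^{+\infty} n^2\|\mathcal{A}_{\eta}(z_{n})-\mathcal{A}_{\eta}(z_{n+1})\|^2<+\infty$; (ii) $\|x_n-x_{n-1}\|=o(1/n)$ and $\|\mathcal{A}_{\eta}(z_n)\|=o(1/n)$ as $n\to+\infty$; (iii) $x_n$ converges weakly, as $n\to+\infty$, to an element of $\mathrm{zer}\,\mathcal{A}$.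
   Context: An operator $\mathcal{A}:\mathcal{H}\to 2^{\mathcal{H}}$ is $\rho$-comonotone if $\langle x-y,u-v\rangle\ge \rho\|u-v\|^2$ for all $(x,u),(y,v)$ in its graph; it is maximally $\rho$-comonotone if it is $\rho$-comonotone and no other $\rho$-comonotone operator has a graph properly containing its graph. The resolvent is $J^{\mathcal{A}}_\eta=(\mathrm{Id}+\eta\mathcal{A})^{-1}$ and the Yosida regularization is $\mathcal{A}_\eta=\frac{1}{\eta}(\mathrm{Id}-J^{\mathcal{A}}_\eta)$ (single-valued and defined on all of $\mathcal{H}$ when $\eta>\max\{-2\rho,0\}$). *)

theory Defs
  imports "HOL-Analysis.Analysis" "HOL-Library.Landau_Symbols"
begin

definition comonotone :: "real \<Rightarrow> ('a::real_inner \<Rightarrow> 'a set) \<Rightarrow> bool" where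
  "comonotone \<rho> A \<longleftrightarrow>
     (\<forall>x u y v. u \<in> A x \<longrightarrow> v \<in> A y \<longrightarrow> inner (x - y) (u - v) \<ge> \<rho> * (norm (u - v))\<^sup>2)"

definition max_comonotone :: "real \<Rightarrow> ('a::real_inner \<Rightarrow> 'a set) \<Rightarrow> bool" where
  "max_comonotone \<rho> A \<longleftrightarrow> comonotone \<rho> A \<and>
     (\<forall>B. comonotone \<rho> B \<and> (\<forall>x. A x \<subseteq> B x) \<longrightarrow> B = A)"

definition zer :: "('a::real_vector \<Rightarrow> 'a set) \<Rightarrow> 'a set" where
  "zer A = {x. 0 \<in> A x}"

text \<open>Resolvent J = (Id + eta A)^{-1}: p is in J x iff x is in p + eta * A p.
  It is single-valued and everywhere defined in the situation of the theorem, so it is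
  defined via THE.\<close>
definition resolvent :: "('a::real_vector \<Rightarrow> 'a set) \<Rightarrow> real \<Rightarrow> 'a \<Rightarrow> 'a" where
  "resolvent A \<eta> x = (THE p. \<exists>u \<in> A p. x = p + \<eta> *\<^sub>R u)"

definition yosida :: "('a::real_vector \<Rightarrow> 'a set) \<Rightarrow> real \<Rightarrow> 'a \<Rightarrow> 'a" where
  "yosida A \<eta> x = (1 / \<eta>) *\<^sub>R (x - resolvent A \<eta> x)"

definition weakly_converges :: "(nat \<Rightarrow> 'a::real_inner) \<Rightarrow> 'a \<Rightarrow> bool" where
  "weakly_converges x l \<longleftrightarrow> (\<forall>y. (\<lambda>n. inner (x n) y) \<longlonglongrightarrow> inner l y)"

end

theory Submission
  imports Defs "HOL-Real_Asymp.Real_Asymp"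
begin

text \<open>The Yosida regularization \<open>B = A\<^sub>\<eta>\<close> of a maximally \<open>\<rho>\<close>-comonotone operator is
  \<open>(\<rho> + \<eta>)\<close>-cocoercive and has the zeros of \<open>A\<close>; that it is defined everywhere is Minty's
  theorem, obtained here from the Kirszbraun--Valentine extension theorem.

  For the scheme, with \<open>d\<^sub>n = x\<^sub>n - x\<^sub>n\<^sub>-\<^sub>1\<close>, \<open>g\<^sub>n = B z\<^sub>n\<close>,
  \<open>\<kappa> = \<alpha> - 1 - \<gamma> > 1\<close> and \<open>\<delta> = \<gamma> (\<rho> + \<eta>) - \<beta> / 2 > 0\<close>, the energy
  \<open>E\<^sub>n = \<parallel>\<gamma> (x\<^sub>n - p) + (n - \<alpha>) d\<^sub>n\<parallel>\<^sup>2 / 2 + \<gamma> \<kappa> \<parallel>x\<^sub>n - p\<parallel>\<^sup>2 / 2\<close>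
  anchored at a zero \<open>p\<close> eventually decreases by \<open>\<kappa> n \<parallel>d\<^sub>n\<parallel>\<^sup>2 / 2\<close>, and
  \<open>W\<^sub>n = n\<^sup>2 \<parallel>\<beta> g\<^sub>n + \<kappa> d\<^sub>n\<parallel>\<^sup>2 / 2\<close> decreases by
  \<open>(\<kappa> - 1) \<beta>\<^sup>2 n \<parallel>g\<^sub>n\<parallel>\<^sup>2 / 2 + \<beta> \<delta> (n + 1)\<^sup>2 \<parallel>g\<^sub>n\<^sub>+\<^sub>1 - g\<^sub>n\<parallel>\<^sup>2 / 2\<close> up to a
  multiple of \<open>n \<parallel>d\<^sub>n\<parallel>\<^sup>2\<close>; these give the summability claims. The sequences
  \<open>n\<^sup>2 \<parallel>d\<^sub>n\<parallel>\<^sup>2\<close> and \<open>W\<^sub>n\<close> converge and are summable against \<open>1 / n\<close>, so they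
  tend to \<open>0\<close>, which gives the rates. Weak convergence follows by Opial's argument, with weak
  cluster points replaced by points in the closed convex hulls of all tails; these exist because
  bounded closed convex sets of a Hilbert space have the finite intersection property.\<close>

lemma weighted_pairwise_dist_eq:
  fixes y :: "'i \<Rightarrow> 'a::real_inner"
  assumes "sum u S = 1"
  shows "(\<Sum>i\<in>S. \<Sum>j\<in>S. u i * u j * (norm (y i - y j))\<^sup>2)
       = 2 * (\<Sum>i\<in>S. u i * (norm (y i - z))\<^sup>2) - 2 * (norm ((\<Sum>i\<in>S. u i *\<^sub>R y i) - z))\<^sup>2"
proof -
  have expand: "(norm (y i - y j))\<^sup>2 = (norm (y i - z))\<^sup>2 + (norm (y j - z))\<^sup>2 - 2 * inner (y i - z) (y j - z)"
    for i j
  proof -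
    have "y i - y j = (y i - z) - (y j - z)" by simp
    then show ?thesis
      by (simp only: power2_norm_eq_inner inner_diff_left inner_diff_right inner_commute) simp
  qed
  have centre: "(\<Sum>i\<in>S. u i *\<^sub>R y i) - z = (\<Sum>i\<in>S. u i *\<^sub>R (y i - z))"
    using assms by (simp add: scaleR_diff_right sum_subtractf scaleR_sum_left[symmetric])
  have "(norm ((\<Sum>i\<in>S. u i *\<^sub>R y i) - z))\<^sup>2 = (\<Sum>i\<in>S. \<Sum>j\<in>S. u i * u j * inner (y i - z) (y j - z))"
    unfolding centre power2_norm_eq_inner inner_sum_left inner_sum_right
    by (subst sum.swap) (simp add: sum_distrib_left mult.assoc inner_commute mult.left_commute)
  moreover have "(\<Sum>i\<in>S. \<Sum>j\<in>S. u i * u j * (norm (y i - y j))\<^sup>2) =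
     (\<Sum>i\<in>S. \<Sum>j\<in>S. u i * u j * (norm (y i - z))\<^sup>2) + (\<Sum>i\<in>S. \<Sum>j\<in>S. u i * u j * (norm (y j - z))\<^sup>2)
     - 2 * (\<Sum>i\<in>S. \<Sum>j\<in>S. u i * u j * inner (y i - z) (y j - z))"
    unfolding expand by (simp add: algebra_simps sum.distrib sum_subtractf sum_distrib_left)
  moreover have "(\<Sum>i\<in>S. \<Sum>j\<in>S. u i * u j * (norm (y i - z))\<^sup>2) = (\<Sum>i\<in>S. u i * (norm (y i - z))\<^sup>2)"
    by (simp add: mult.commute mult.left_commute sum_distrib_left[symmetric] sum_distrib_right[symmetric] assms)
  moreover have "(\<Sum>i\<in>S. \<Sum>j\<in>S. u i * u j * (norm (y j - z))\<^sup>2) = (\<Sum>i\<in>S. u i * (norm (y i - z))\<^sup>2)"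
    by (subst sum.swap)
      (simp add: mult.commute mult.left_commute sum_distrib_left[symmetric] sum_distrib_right[symmetric] assms)
  ultimately show ?thesis by simp
qed

lemma continuous_on_Max_finite:
  assumes "finite F" "F \<noteq> {}" "\<And>i. i \<in> F \<Longrightarrow> continuous_on K (f i)"
  shows "continuous_on K (\<lambda>y. Max ((\<lambda>i. f i y) ` F) :: real)"
  using assms
proof (induction F rule: finite_ne_induct)
  case (insert i F)
  then have "(\<lambda>y. Max ((\<lambda>i. f i y) ` insert i F)) = (\<lambda>y. max (f i y) (Max ((\<lambda>i. f i y) ` F)))"
    by (simp add: Max_insert)
  then show ?case
    using insert by (simp add: continuous_on_max)
qed simp

lemma norm_step_toward_closest_point_less:
  fixes y p q :: "'a::real_inner"
  assumes obtuse: "inner (y - p) (q - p) \<le> 0" and "p \<noteq> y" and t: "0 < t" "t < 2"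
  shows "norm (y + t *\<^sub>R (p - y) - q) < norm (y - q)"
proof -
  have "inner (y - q) (p - y) = inner (q - p) (y - p) - (norm (p - y))\<^sup>2"
    by (simp add: power2_norm_eq_inner inner_diff_left inner_diff_right inner_commute)
  also have "\<dots> \<le> - (norm (p - y))\<^sup>2"
    using obtuse by (simp add: inner_commute)
  finally have angle: "inner (y - q) (p - y) \<le> - (norm (p - y))\<^sup>2" .
  have "(norm (y + t *\<^sub>R (p - y) - q))\<^sup>2
      = (norm (y - q))\<^sup>2 + 2 * t * inner (y - q) (p - y) + t\<^sup>2 * (norm (p - y))\<^sup>2"
    unfolding power2_norm_eq_inner by (simp add: inner_add_left inner_add_right inner_diff_left inner_diff_right
        inner_commute algebra_simps power2_eq_square)
  also have "\<dots> \<le> (norm (y - q))\<^sup>2 - t * (2 - t) * (norm (p - y))\<^sup>2"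
    using mult_left_mono[OF angle, of "2 * t"] t by (simp add: algebra_simps power2_eq_square)
  also have "\<dots> < (norm (y - q))\<^sup>2"
    using t \<open>p \<noteq> y\<close> by simp
  finally show ?thesis
    by (rule power2_less_imp_less) simp
qed

lemma exists_step_into_open_balls:
  fixes y p :: "'a::real_inner"
  assumes "finite F" and le: "\<And>i. i \<in> F \<Longrightarrow> norm (y - b i) \<le> r i"
    and obtuse: "\<And>i. i \<in> F \<Longrightarrow> norm (y - b i) = r i \<Longrightarrow> inner (y - p) (b i - p) \<le> 0"
    and "p \<noteq> y"
  shows "\<exists>t. 0 < t \<and> t < 1 \<and> (\<forall>i\<in>F. norm (y + t *\<^sub>R (p - y) - b i) < r i)"
proof -
  have "\<forall>\<^sub>F t in at_right 0. norm (y + t *\<^sub>R (p - y) - b i) < r i" if i: "i \<in> F" for i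
  proof (cases "norm (y - b i) = r i")
    case True
    have "\<forall>\<^sub>F t in at_right 0. 0 < t \<and> t < (2::real)"
      by (simp add: eventually_at_right_field) (auto intro!: exI[of _ 2])
    then show ?thesis
      by eventually_elim (use norm_step_toward_closest_point_less[OF obtuse[OF i True] \<open>p \<noteq> y\<close>] True in auto)
  next
    case False
    have "((\<lambda>t. norm (y + t *\<^sub>R (p - y) - b i)) \<longlongrightarrow> norm (y + 0 *\<^sub>R (p - y) - b i)) (at_right 0)"
      by (intro tendsto_intros)
    then show ?thesis
      using False le[OF i] by (intro order_tendstoD(2)) auto
  qed
  then have "\<forall>\<^sub>F t in at_right 0. \<forall>i\<in>F. norm (y + t *\<^sub>R (p - y) - b i) < r i"
    using \<open>finite F\<close> by (intro eventually_ball_finite) auto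
  moreover have "\<forall>\<^sub>F t in at_right 0. 0 < t \<and> t < (1::real)"
    by (simp add: eventually_at_right_field) (auto intro!: exI[of _ 1])
  ultimately have "\<forall>\<^sub>F t in at_right 0. 0 < t \<and> t < 1 \<and> (\<forall>i\<in>F. norm (y + t *\<^sub>R (p - y) - b i) < r i)"
    by eventually_elim auto
  from eventually_happens[OF this] show ?thesis
    by auto
qed

lemma nonexpansive_hull_ratio_le_one:
  fixes a b :: "'i \<Rightarrow> 'a::real_inner"
  assumes "finite I" and y: "y \<in> convex hull (b ` I)"
    and lip: "\<And>i j. i \<in> I \<Longrightarrow> j \<in> I \<Longrightarrow> norm (b i - b j) \<le> norm (a i - a j)"
    and ratio: "\<And>i. i \<in> I \<Longrightarrow> norm (y - b i) = c * norm (x - a i)"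
    and outside: "\<And>i. i \<in> I \<Longrightarrow> x \<noteq> a i"
  shows "c \<le> 1"
proof -
  define S where "S = b ` I"
  define a' where "a' s = a (inv_into I b s)" for s
  have "finite S" using \<open>finite I\<close> by (simp add: S_def)
  obtain u where u: "\<forall>s\<in>S. 0 \<le> u s" "sum u S = 1" "(\<Sum>s\<in>S. u s *\<^sub>R s) = y"
    using y unfolding S_def[symmetric] convex_hull_finite[OF \<open>finite S\<close>] by blast
  have inv: "inv_into I b s \<in> I" "b (inv_into I b s) = s" if "s \<in> S" for s
    using that by (auto simp: S_def inv_into_into f_inv_into_f)
  define T where "T = (\<Sum>s\<in>S. u s * (norm (a' s - x))\<^sup>2)"
  have "(norm (s - y))\<^sup>2 = c\<^sup>2 * (norm (a' s - x))\<^sup>2" if "s \<in> S" for s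
  proof -
    have "norm (s - y) = c * norm (a' s - x)"
      using ratio[OF inv(1)[OF that]] inv(2)[OF that] by (simp add: a'_def norm_minus_commute)
    then show ?thesis by (simp add: power_mult_distrib)
  qed
  then have "2 * c\<^sup>2 * T = 2 * (\<Sum>s\<in>S. u s * (norm (s - y))\<^sup>2)"
    unfolding T_def sum_distrib_left by (simp add: algebra_simps)
  also have "\<dots> = (\<Sum>s\<in>S. \<Sum>s'\<in>S. u s * u s' * (norm (s - s'))\<^sup>2)"
    using weighted_pairwise_dist_eq[OF u(2), of "\<lambda>s. s" y] u(3) by simp
  also have "\<dots> \<le> (\<Sum>s\<in>S. \<Sum>s'\<in>S. u s * u s' * (norm (a' s - a' s'))\<^sup>2)"
    using u(1) inv lip by (intro sum_mono mult_left_mono power_mono) (auto simp: a'_def, metis)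
  also have "\<dots> \<le> 2 * T"
    using weighted_pairwise_dist_eq[OF u(2), of a' x] by (simp add: T_def)
  finally have "c\<^sup>2 * T \<le> T" by simp
  moreover have "T > 0"
  proof -
    obtain s where s: "s \<in> S" "u s > 0"
      using u(1,2) by (metis le_less sum.neutral zero_neq_one)
    then have "0 < u s * (norm (a' s - x))\<^sup>2"
      using outside[OF inv(1)[OF s(1)]] by (simp add: a'_def)
    then show ?thesis
      unfolding T_def using \<open>finite S\<close> s u(1) by (intro sum_pos2[where i=s]) auto
  qed
  ultimately have "c\<^sup>2 \<le> 1\<^sup>2" by simp
  then show ?thesis
    using abs_le_square_iff[of c 1] by simp
qed

lemma near_min_norm_points_close:
  fixes y1 y2 :: "'a::real_inner"
  assumes "convex C" "y1 \<in> C" "y2 \<in> C" and min: "\<And>y. y \<in> C \<Longrightarrow> m \<le> norm y" and "0 \<le> m"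
    and y1: "norm y1 \<le> m + e" and y2: "norm y2 \<le> m + e"
  shows "(norm (y1 - y2))\<^sup>2 \<le> 4 * e * (2 * m + e)"
proof -
  have "(1/2) *\<^sub>R y1 + (1/2) *\<^sub>R y2 \<in> C"
    using assms(1-3) by (rule convexD) auto
  then have "m \<le> norm ((1/2) *\<^sub>R (y1 + y2))"
    using min by (simp add: scaleR_add_right)
  then have "2 * m \<le> norm (y1 + y2)"
    by simp
  then have sum: "(2 * m)\<^sup>2 \<le> (norm (y1 + y2))\<^sup>2"
    using \<open>0 \<le> m\<close> by (intro power_mono) auto
  have parallelogram: "(norm (y1 - y2))\<^sup>2 + (norm (y1 + y2))\<^sup>2 = 2 * (norm y1)\<^sup>2 + 2 * (norm y2)\<^sup>2"
    unfolding power2_norm_eq_inner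
    by (simp add: inner_diff_left inner_diff_right inner_add_left inner_add_right inner_commute)
  have "(norm y1)\<^sup>2 \<le> (m + e)\<^sup>2" "(norm y2)\<^sup>2 \<le> (m + e)\<^sup>2"
    using y1 y2 by (simp_all add: power_mono)
  moreover have "4 * (m + e)\<^sup>2 - (2 * m)\<^sup>2 = 4 * e * (2 * m + e)"
    by (simp add: power2_eq_square algebra_simps)
  ultimately show ?thesis
    using sum parallelogram by linarith
qed

lemma Cauchy_if_dist_le:
  fixes p :: "nat \<Rightarrow> 'a::metric_space"
  assumes dist: "\<And>k l. k \<le> l \<Longrightarrow> dist (p l) (p k) \<le> c k" and "c \<longlonglongrightarrow> 0"
  shows "Cauchy p"
  unfolding Cauchy_altdef2
proof (intro allI impI)
  fix r :: real assume "r > 0"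
  then obtain N where N: "c N < r"
    using order_tendstoD(2)[OF \<open>c \<longlonglongrightarrow> 0\<close>] by (auto simp: eventually_sequentially)
  then show "\<exists>N. \<forall>n\<ge>N. dist (p n) (p N) < r"
    using dist by (intro exI[of _ N]) (auto intro: le_less_trans)
qed

lemma directed_family_nested_sequence:
  fixes f :: "nat \<Rightarrow> real" and m :: "'a set \<Rightarrow> real"
  assumes above: "\<And>k. \<exists>C\<in>\<C>. f k < m C"
    and directed: "\<And>C1 C2. C1 \<in> \<C> \<Longrightarrow> C2 \<in> \<C> \<Longrightarrow> \<exists>C3\<in>\<C>. C3 \<subseteq> C1 \<inter> C2"
    and antitone: "\<And>C D. C \<subseteq> D \<Longrightarrow> C \<in> \<C> \<Longrightarrow> m D \<le> m C"
  obtains G where "\<And>k. G k \<in> \<C>" "\<And>k. f k < m (G k)" "\<And>k l. k \<le> l \<Longrightarrow> G l \<subseteq> G k"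
proof -
  have "\<exists>G. \<forall>k. (G k \<in> \<C> \<and> f k < m (G k)) \<and> G (Suc k) \<subseteq> G k"
  proof (rule dependent_nat_choice)
    fix C k assume C: "C \<in> \<C> \<and> f k < m C"
    obtain C' where "C' \<in> \<C>" "f (Suc k) < m C'"
      using above by blast
    moreover obtain D where "D \<in> \<C>" "D \<subseteq> C \<inter> C'"
      using directed C \<open>C' \<in> \<C>\<close> by blast
    ultimately show "\<exists>D. (D \<in> \<C> \<and> f (Suc k) < m D) \<and> D \<subseteq> C"
      using antitone[of D C'] by (intro exI[of _ D]) auto
  qed (use above in blast)
  then obtain G where G: "\<And>k. G k \<in> \<C>" "\<And>k. f k < m (G k)" "\<And>k. G (Suc k) \<subseteq> G k"
    by blast
  moreover have "G l \<subseteq> G k" if "k \<le> l" for k l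
    using that by (induction rule: dec_induct) (use G(3) in blast)+
  ultimately show ?thesis
    using that by blast
qed

text \<open>A substitute for the weak compactness of bounded closed convex sets: the minimal norms of
  the members of the family increase towards a supremum, and near-minimal points of nested
  members are then close to each other by the parallelogram law, so they form a Cauchy
  sequence whose limit lies in the closure of every member.\<close>

lemma directed_convex_family_closure_Inter_nonempty:
  fixes \<C> :: "'a::{real_inner,complete_space} set set"
  assumes "\<C> \<noteq> {}" and convex_ne: "\<And>C. C \<in> \<C> \<Longrightarrow> convex C \<and> C \<noteq> {}" and "bounded (\<Union>\<C>)"
    and directed: "\<And>C1 C2. C1 \<in> \<C> \<Longrightarrow> C2 \<in> \<C> \<Longrightarrow> \<exists>C3\<in>\<C>. C3 \<subseteq> C1 \<inter> C2"
  shows "\<exists>l. \<forall>C\<in>\<C>. l \<in> closure C"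
proof -
  define m where "m C = Inf (norm ` C)" for C :: "'a set"
  define M where "M = Sup (m ` \<C>)"
  define e where "e k = 1 / real (Suc k)" for k
  obtain R where R: "\<And>y. y \<in> \<Union>\<C> \<Longrightarrow> norm y \<le> R"
    using \<open>bounded (\<Union>\<C>)\<close> by (metis bounded_iff)
  have e: "0 < e k" "e k \<le> 1" "e l \<le> e k" if "k \<le> l" for k l
    using that by (auto simp: e_def field_simps)
  have m_le: "m C \<le> norm y" if "y \<in> C" for C y
    unfolding m_def using that by (intro cInf_lower) (auto intro: bdd_belowI[of _ 0])
  have m_nonneg: "0 \<le> m C" if "C \<in> \<C>" for C
    unfolding m_def using convex_ne[OF that] by (intro cInf_greatest) auto
  have m_anti: "m D \<le> m C" if "C \<subseteq> D" "C \<in> \<C>" for C D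
    unfolding m_def using that convex_ne
    by (intro cInf_superset_mono) (auto intro: bdd_belowI[of _ 0])
  have near_min: "\<exists>y\<in>C. norm y < m C + e k" if "C \<in> \<C>" for C k
  proof -
    have "\<exists>t\<in>norm ` C. t < m C + e k"
      using convex_ne[OF that] e(1)[OF order_refl] by (intro cInf_lessD) (auto simp: m_def)
    then show ?thesis by blast
  qed
  have m_le_R: "m C \<le> R" if C: "C \<in> \<C>" for C
  proof -
    obtain y where "y \<in> C" using convex_ne[OF C] by blast
    then show ?thesis
      using m_le R C by (meson UnionI order_trans)
  qed
  have m_le_M: "m C \<le> M" if "C \<in> \<C>" for C
    unfolding M_def using m_le_R that by (intro cSup_upper) (auto intro: bdd_aboveI[of _ R])
  have "\<exists>C\<in>\<C>. M - e k < m C" for k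
    using less_cSupD[of "m ` \<C>" "M - e k"] \<open>\<C> \<noteq> {}\<close> e(1)[OF order_refl] by (auto simp: M_def)
  then obtain G where G: "\<And>k. G k \<in> \<C>" "\<And>k. M - e k < m (G k)" and G_anti: "\<And>k l. k \<le> l \<Longrightarrow> G l \<subseteq> G k"
    using directed_family_nested_sequence[where f="\<lambda>k. M - e k" and m=m] directed m_anti by metis
  define c where "c k = sqrt (16 * e k * (M + 1))" for k
  have c: "c \<longlonglongrightarrow> 0"
  proof -
    have "(\<lambda>k. sqrt (16 * e k * (M + 1))) \<longlonglongrightarrow> sqrt (16 * 0 * (M + 1))"
      unfolding e_def by (intro tendsto_intros LIMSEQ_inverse_real_of_nat[unfolded inverse_eq_divide])
    then show ?thesis by (simp add: c_def[abs_def])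
  qed
  have close: "norm (y - y') \<le> c k"
    if "y \<in> G k" "norm y < M + e k" "y' \<in> G k" "norm y' < M + e k" for k y y'
  proof -
    have "norm y \<le> m (G k) + 2 * e k" "norm y' \<le> m (G k) + 2 * e k"
      using that G(2)[of k] by linarith+
    then have "(norm (y - y'))\<^sup>2 \<le> 4 * (2 * e k) * (2 * m (G k) + 2 * e k)"
      using convex_ne[OF G(1)] that(1,3) m_le m_nonneg[OF G(1)]
      by (intro near_min_norm_points_close[of "G k"]) auto
    also have "\<dots> = 16 * e k * (m (G k) + e k)"
      by (simp add: algebra_simps)
    also have "\<dots> \<le> 16 * e k * (M + 1)"
      using m_le_M[OF G(1), of k] e[OF order_refl, of k] by (intro mult_left_mono) auto
    finally show ?thesis
      by (simp add: c_def real_le_rsqrt)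
  qed
  have "\<forall>k. \<exists>y\<in>G k. norm y < m (G k) + e k"
    using near_min G(1) by blast
  then obtain p where p: "\<And>k. p k \<in> G k" "\<And>k. norm (p k) < m (G k) + e k"
    by metis
  have p_small: "norm (p l) < M + e k" if "k \<le> l" for k l
    using p(2)[of l] m_le_M[OF G(1), of l] e[OF that] by linarith
  have "Cauchy p"
  proof (rule Cauchy_if_dist_le[OF _ c])
    fix k l :: nat assume "k \<le> l"
    then show "dist (p l) (p k) \<le> c k"
      using close[OF subsetD[OF G_anti p(1)] p_small p(1) p_small[OF order_refl]] by (simp add: dist_norm)
  qed
  then obtain l where l: "p \<longlonglongrightarrow> l"
    by (auto simp: Cauchy_convergent_iff convergent_def)
  have "l \<in> closure C" if C: "C \<in> \<C>" for C
  proof -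
    have "\<exists>y. y \<in> C \<inter> G k \<and> norm y < M + e k" for k
    proof -
      obtain D where D: "D \<in> \<C>" "D \<subseteq> G k \<inter> C"
        using directed[OF G(1) C] by blast
      obtain y where y: "y \<in> D" "norm y < m D + e k"
        using near_min[OF D(1)] by blast
      show ?thesis
        using D y m_le_M[OF D(1)] by (intro exI[of _ y]) auto
    qed
    then obtain q where q: "\<And>k. q k \<in> C \<inter> G k" "\<And>k. norm (q k) < M + e k"
      by metis
    have "norm (q k - p k) \<le> c k" for k
      using close[of "q k" k "p k"] q p(1) p_small[OF order_refl] by blast
    then have "(\<lambda>k. q k - p k) \<longlonglongrightarrow> 0"
      by (intro Lim_null_comparison[OF _ c] always_eventually) simp
    from tendsto_add[OF this l] have "q \<longlonglongrightarrow> l"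
      by simp
    then show ?thesis
      using q(1) by (intro closure_sequential[THEN iffD2]) blast
  qed
  then show ?thesis by blast
qed

lemma kirszbraun_scaled_balls_le_one:
  fixes a b :: "'i \<Rightarrow> 'a::real_inner"
  assumes "finite F"
    and lip: "\<And>i j. i \<in> F \<Longrightarrow> j \<in> F \<Longrightarrow> norm (b i - b j) \<le> norm (a i - a j)"
    and outside: "\<And>i. i \<in> F \<Longrightarrow> x \<noteq> a i"
    and y0: "y0 \<in> convex hull (b ` F)" and closed_balls: "\<And>i. i \<in> F \<Longrightarrow> norm (y0 - b i) \<le> c * norm (x - a i)"
    and no_open: "\<And>y. y \<in> convex hull (b ` F) \<Longrightarrow> \<exists>i\<in>F. c * norm (x - a i) \<le> norm (y - b i)"
  shows "c \<le> 1"
proof -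
  define I where "I = {i\<in>F. norm (y0 - b i) = c * norm (x - a i)}"
  have "I \<noteq> {}"
    using no_open[OF y0] closed_balls by (force simp: I_def)
  have "finite I" "I \<subseteq> F"
    using \<open>finite F\<close> by (auto simp: I_def)
  then have "compact (convex hull (b ` I))" "convex hull (b ` I) \<noteq> {}"
    using \<open>I \<noteq> {}\<close> by (auto simp: finite_imp_compact_convex_hull)
  moreover have "continuous_on (convex hull (b ` I)) (dist y0)"
    by (intro continuous_intros)
  ultimately obtain p where p: "p \<in> convex hull (b ` I)" "\<And>q. q \<in> convex hull (b ` I) \<Longrightarrow> dist y0 p \<le> dist y0 q"
    by (metis continuous_attains_inf)
  show ?thesis
  proof (cases "p = y0")
    case True
    then show ?thesis
      using p(1) \<open>finite I\<close> \<open>I \<subseteq> F\<close> lip outside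
      by (intro nonexpansive_hull_ratio_le_one[of I y0 b a]) (auto simp: I_def)
  next
    case False
    have "inner (y0 - p) (b i - p) \<le> 0" if "i \<in> I" for i
      using p that \<open>compact (convex hull (b ` I))\<close>
      by (intro any_closest_point_dot) (auto simp: compact_imp_closed hull_inc)
    then obtain t where t: "0 < t" "t < 1" "\<forall>i\<in>F. norm (y0 + t *\<^sub>R (p - y0) - b i) < c * norm (x - a i)"
      using exists_step_into_open_balls[of F y0 b "\<lambda>i. c * norm (x - a i)" p] closed_balls \<open>finite F\<close> False
      by (auto simp: I_def)
    have "p \<in> convex hull (b ` F)"
      using p(1) hull_mono[of "b ` I" "b ` F"] \<open>I \<subseteq> F\<close> by auto
    then have "(1 - t) *\<^sub>R y0 + t *\<^sub>R p \<in> convex hull (b ` F)"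
      using y0 t by (intro convexD) auto
    moreover have "(1 - t) *\<^sub>R y0 + t *\<^sub>R p = y0 + t *\<^sub>R (p - y0)"
      by (simp add: algebra_simps)
    ultimately show ?thesis
      using no_open t(3) by (metis not_less)
  qed
qed

text \<open>Minimize the largest ratio \<open>\<parallel>y - b i\<parallel> / \<parallel>x - a i\<parallel>\<close> over the hull of the centres.\<close>

lemma kirszbraun_finite:
  fixes a b :: "'i \<Rightarrow> 'a::real_inner"
  assumes "finite F"
    and lip: "\<And>i j. i \<in> F \<Longrightarrow> j \<in> F \<Longrightarrow> norm (b i - b j) \<le> norm (a i - a j)"
  shows "\<exists>y. \<forall>i\<in>F. norm (y - b i) \<le> norm (x - a i)"
proof -
  consider "F = {}" | i0 where "i0 \<in> F" "x = a i0" | "F \<noteq> {}" "\<And>i. i \<in> F \<Longrightarrow> x \<noteq> a i"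
    by blast
  then show ?thesis
  proof cases
    case (2 i0)
    then show ?thesis
      using lip by (intro exI[of _ "b i0"]) (auto simp: norm_minus_commute)
  next
    case 3
    define r where "r i = norm (x - a i)" for i
    have r: "0 < r i" if "i \<in> F" for i
      using 3(2)[OF that] by (simp add: r_def)
    define \<phi> where "\<phi> y = Max ((\<lambda>i. norm (y - b i) / r i) ` F)" for y
    define K where "K = convex hull (b ` F)"
    have \<phi>: "norm (y - b i) \<le> \<phi> y * r i" if "i \<in> F" for i y
    proof -
      have "norm (y - b i) / r i \<le> \<phi> y"
        unfolding \<phi>_def using \<open>finite F\<close> that by (intro Max_ge) auto
      then show ?thesis
        using r[OF that] by (simp add: field_simps)
    qed
    have "r i \<noteq> 0" if "i \<in> F" for i
      using r[OF that] by simp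
    then have "continuous_on K \<phi>"
      unfolding \<phi>_def using \<open>finite F\<close> 3(1)
      by (intro continuous_on_Max_finite continuous_intros) auto
    moreover have "compact K" "K \<noteq> {}"
      using \<open>finite F\<close> 3(1) by (auto simp: K_def finite_imp_compact_convex_hull)
    ultimately obtain y0 where y0: "y0 \<in> K" "\<And>y. y \<in> K \<Longrightarrow> \<phi> y0 \<le> \<phi> y"
      by (metis continuous_attains_inf)
    have "\<exists>i\<in>F. \<phi> y0 * norm (x - a i) \<le> norm (y - b i)" if "y \<in> K" for y
    proof (rule ccontr)
      assume "\<not> ?thesis"
      then have "norm (y - b i) / r i < \<phi> y0" if "i \<in> F" for i
        using that r[OF that] by (auto simp: r_def pos_divide_less_eq)
      then have "\<phi> y < \<phi> y0"
        unfolding \<phi>_def[of y] using \<open>finite F\<close> 3(1) by (subst Max_less_iff) auto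
      with y0(2)[OF \<open>y \<in> K\<close>] show False
        by simp
    qed
    then have "\<phi> y0 \<le> 1"
      using \<phi> y0(1) \<open>finite F\<close> lip 3(2)
      by (intro kirszbraun_scaled_balls_le_one[of F b a x y0]) (auto simp: K_def r_def mult.commute)
    have "norm (y0 - b i) \<le> norm (x - a i)" if "i \<in> F" for i
    proof -
      have "\<phi> y0 * r i \<le> r i"
        using \<open>\<phi> y0 \<le> 1\<close> r[OF that] by (simp add: mult_left_le_one_le)
      then show ?thesis
        using \<phi>[OF that, of y0] by (simp add: r_def)
    qed
    then show ?thesis by blast
  qed simp
qed

lemma kirszbraun_extension_point:
  fixes a b :: "'i \<Rightarrow> 'a::{real_inner,complete_space}"
  assumes lip: "\<And>i j. i \<in> I \<Longrightarrow> j \<in> I \<Longrightarrow> norm (b i - b j) \<le> norm (a i - a j)"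
  shows "\<exists>y. \<forall>i\<in>I. norm (y - b i) \<le> norm (x - a i)"
proof (cases "I = {}")
  case False
  then obtain i0 where "i0 \<in> I" by blast
  define B where "B F = (\<Inter>i\<in>insert i0 F. cball (b i) (norm (x - a i)))" for F
  have mem_B: "y \<in> B F \<longleftrightarrow> (\<forall>i\<in>insert i0 F. norm (y - b i) \<le> norm (x - a i))" for y F
    by (auto simp: B_def dist_norm norm_minus_commute)
  define \<C> where "\<C> = B ` {F. finite F \<and> F \<subseteq> I}"
  have "\<exists>l. \<forall>C\<in>\<C>. l \<in> closure C"
  proof (rule directed_convex_family_closure_Inter_nonempty)
    fix C assume "C \<in> \<C>"
    then obtain F where F: "C = B F" "finite F" "F \<subseteq> I" by (auto simp: \<C>_def)
    have "convex (B F)"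
      unfolding B_def by (intro convex_INT) auto
    moreover obtain y where "\<forall>i\<in>insert i0 F. norm (y - b i) \<le> norm (x - a i)"
      using kirszbraun_finite[of "insert i0 F" b a x] lip \<open>i0 \<in> I\<close> F by (meson finite_insert insert_subset subsetD)
    ultimately show "convex C \<and> C \<noteq> {}"
      using F(1) mem_B by blast
  next
    have "\<Union>\<C> \<subseteq> cball (b i0) (norm (x - a i0))"
      by (auto simp: \<C>_def B_def)
    then show "bounded (\<Union>\<C>)"
      using bounded_cball bounded_subset by blast
  next
    fix C1 C2 assume "C1 \<in> \<C>" "C2 \<in> \<C>"
    then obtain F1 F2 where "C1 = B F1" "C2 = B F2" "finite F1" "finite F2" "F1 \<subseteq> I" "F2 \<subseteq> I"
      by (auto simp: \<C>_def)
    then show "\<exists>C3\<in>\<C>. C3 \<subseteq> C1 \<inter> C2"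
      unfolding \<C>_def by (intro bexI[of _ "B (F1 \<union> F2)"]) (auto simp: B_def)
  qed (auto simp: \<C>_def)
  then obtain l where l: "\<forall>C\<in>\<C>. l \<in> closure C"
    by blast
  have "closed (B F)" for F
    unfolding B_def by (intro closed_INT) auto
  then have "l \<in> B {i}" if "i \<in> I" for i
    using l that by (auto simp: \<C>_def closure_closed)
  then show ?thesis
    using mem_B by blast
qed simp

definition cocoercive :: "real \<Rightarrow> ('a::real_inner \<Rightarrow> 'a) \<Rightarrow> bool" where
  "cocoercive \<mu> B \<longleftrightarrow> (\<forall>u v. \<mu> * (norm (B u - B v))\<^sup>2 \<le> inner (u - v) (B u - B v))"

lemma cocoercive_monotone:
  assumes "cocoercive \<mu> B" "0 \<le> \<mu>"
  shows "0 \<le> inner (u - v) (B u - B v)"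
  using assms unfolding cocoercive_def by (meson order_trans zero_le_mult_iff zero_le_power2)

lemma cocoercive_continuous:
  assumes "cocoercive \<mu> B" "0 < \<mu>"
  shows "continuous_on UNIV B"
proof (rule lipschitz_on_continuous_on)
  show "(1 / \<mu>)-lipschitz_on UNIV B"
  proof (rule lipschitz_onI)
    fix u v
    have "\<mu> * (norm (B u - B v))\<^sup>2 \<le> inner (u - v) (B u - B v)"
      using assms(1) by (simp add: cocoercive_def)
    also have "\<dots> \<le> norm (u - v) * norm (B u - B v)"
      using Cauchy_Schwarz_ineq2[of "u - v" "B u - B v"] by linarith
    finally have "(\<mu> * norm (B u - B v)) * norm (B u - B v) \<le> norm (u - v) * norm (B u - B v)"
      by (simp add: power2_eq_square mult.assoc)
    then have "\<mu> * norm (B u - B v) \<le> norm (u - v)"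
      by (cases "B u = B v") (use mult_le_cancel_right_pos[of "norm (B u - B v)"] in auto)
    then show "dist (B u) (B v) \<le> 1 / \<mu> * dist u v"
      using assms(2) by (simp add: dist_norm field_simps)
  qed (use assms(2) in simp)
qed

lemma comonotoneD:
  "comonotone \<rho> A \<Longrightarrow> u \<in> A p \<Longrightarrow> v \<in> A q \<Longrightarrow> \<rho> * (norm (u - v))\<^sup>2 \<le> inner (p - q) (u - v)"
  unfolding comonotone_def by blast

lemma comonotone_resolvent_unique:
  assumes "comonotone \<rho> A" "0 < \<rho> + \<eta>"
    and "u \<in> A p" "v \<in> A q" and eq: "p + \<eta> *\<^sub>R u = q + \<eta> *\<^sub>R v"
  shows "p = q" "u = v"
proof -
  have pq: "p - q = \<eta> *\<^sub>R (v - u)"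
    using eq by (simp add: algebra_simps)
  have "\<rho> * (norm (u - v))\<^sup>2 \<le> - \<eta> * (norm (u - v))\<^sup>2"
    using comonotoneD[OF assms(1,3,4)] unfolding pq power2_norm_eq_inner
    by (simp add: inner_diff_left inner_diff_right inner_commute algebra_simps)
  then have "(\<rho> + \<eta>) * (norm (u - v))\<^sup>2 \<le> 0"
    by (simp add: algebra_simps)
  then show "u = v"
    using assms(2) by (simp add: mult_le_0_iff)
  then show "p = q"
    using pq by simp
qed

lemma norm_reflection_le_iff_comonotone:
  fixes p q u v :: "'a::real_inner"
  assumes "0 < \<rho> + \<eta>"
  shows "norm ((p + \<eta> *\<^sub>R u) - (q + \<eta> *\<^sub>R v) - (2 * (\<rho> + \<eta>)) *\<^sub>R (u - v))
           \<le> norm ((p + \<eta> *\<^sub>R u) - (q + \<eta> *\<^sub>R v))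
         \<longleftrightarrow> \<rho> * (norm (u - v))\<^sup>2 \<le> inner (p - q) (u - v)"
proof -
  define s where "s = (p + \<eta> *\<^sub>R u) - (q + \<eta> *\<^sub>R v)"
  define \<delta> where "\<delta> = u - v"
  define \<mu> where "\<mu> = \<rho> + \<eta>"
  have expand: "(norm (s - (2 * \<mu>) *\<^sub>R \<delta>))\<^sup>2 = (norm s)\<^sup>2 - 4 * (\<mu> * (inner s \<delta> - \<mu> * (norm \<delta>)\<^sup>2))"
    unfolding power2_norm_eq_inner
    by (simp add: inner_diff_left inner_diff_right inner_commute algebra_simps power2_eq_square)
  have inner_s: "inner s \<delta> = inner (p - q) \<delta> + \<eta> * (norm \<delta>)\<^sup>2"
    unfolding s_def \<delta>_def power2_norm_eq_inner
    by (simp add: inner_diff_left inner_diff_right inner_add_left inner_add_right algebra_simps)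
  have "norm (s - (2 * \<mu>) *\<^sub>R \<delta>) \<le> norm s \<longleftrightarrow> (norm (s - (2 * \<mu>) *\<^sub>R \<delta>))\<^sup>2 \<le> (norm s)\<^sup>2"
    using abs_le_square_iff[of "norm (s - (2 * \<mu>) *\<^sub>R \<delta>)" "norm s"] by simp
  also have "\<dots> \<longleftrightarrow> 0 \<le> \<mu> * (inner s \<delta> - \<mu> * (norm \<delta>)\<^sup>2)"
    unfolding expand by linarith
  also have "\<dots> \<longleftrightarrow> 0 \<le> inner s \<delta> - \<mu> * (norm \<delta>)\<^sup>2"
    using assms by (simp add: \<mu>_def zero_le_mult_iff)
  also have "\<dots> \<longleftrightarrow> \<rho> * (norm \<delta>)\<^sup>2 \<le> inner (p - q) \<delta>"
    unfolding inner_s \<mu>_def distrib_right by (intro iffI; linarith)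
  finally show ?thesis
    by (simp only: s_def \<delta>_def \<mu>_def)
qed

lemma max_comonotone_memI:
  assumes "max_comonotone \<rho> A"
    and new: "\<And>q v. v \<in> A q \<Longrightarrow> \<rho> * (norm (w - v))\<^sup>2 \<le> inner (p - q) (w - v)"
  shows "w \<in> A p"
proof -
  define A' where "A' y = A y \<union> (if y = p then {w} else {})" for y
  have co: "comonotone \<rho> A"
    using assms(1) by (simp add: max_comonotone_def)
  have "comonotone \<rho> A'"
    unfolding comonotone_def
  proof (intro allI impI)
    fix y1 u1 y2 u2 assume "u1 \<in> A' y1" "u2 \<in> A' y2"
    then consider "u1 \<in> A y1" "u2 \<in> A y2" | "u1 \<in> A y1" "y2 = p" "u2 = w"
      | "y1 = p" "u1 = w" "u2 \<in> A y2" | "y1 = p" "u1 = w" "y2 = p" "u2 = w"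
      by (auto simp: A'_def split: if_splits)
    then show "\<rho> * (norm (u1 - u2))\<^sup>2 \<le> inner (y1 - y2) (u1 - u2)"
    proof cases
      case 2
      then show ?thesis
        using new[of u1 y1] by (simp add: norm_minus_commute inner_diff_left inner_diff_right inner_commute)
    qed (use comonotoneD[OF co] new in auto)
  qed
  then have "A' = A"
    using assms(1) by (auto simp: max_comonotone_def A'_def)
  then show ?thesis
    by (metis A'_def UnI2 singletonI)
qed

text \<open>The map \<open>p + \<eta> u \<mapsto> p + \<eta> u - 2 (\<rho> + \<eta>) u\<close>
  on the graph is nonexpansive, its Kirszbraun--Valentine extension to \<open>x\<close> yields a pair that
  is comonotone to the whole graph, and maximality puts it into the graph.\<close>

lemma max_comonotone_resolvent_exists:
  fixes A :: "'a::{real_inner,complete_space} \<Rightarrow> 'a set"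
  assumes "max_comonotone \<rho> A" "0 < \<rho> + \<eta>"
  shows "\<exists>p. \<exists>u\<in>A p. x = p + \<eta> *\<^sub>R u"
proof -
  define \<mu> where "\<mu> = \<rho> + \<eta>"
  have co: "comonotone \<rho> A"
    using assms(1) by (simp add: max_comonotone_def)
  define I where "I = {(q, v). v \<in> A q}"
  define a where "a i = fst i + \<eta> *\<^sub>R snd i" for i :: "'a \<times> 'a"
  define b where "b i = a i - (2 * \<mu>) *\<^sub>R snd i" for i :: "'a \<times> 'a"
  have "norm (b i - b j) \<le> norm (a i - a j)" if graph: "i \<in> I" "j \<in> I" for i j
  proof -
    obtain q v q' v' where ij: "i = (q, v)" "j = (q', v')" "v \<in> A q" "v' \<in> A q'"
      using graph by (auto simp: I_def)
    have "b i - b j = (q + \<eta> *\<^sub>R v) - (q' + \<eta> *\<^sub>R v') - (2 * (\<rho> + \<eta>)) *\<^sub>R (v - v')"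
      by (simp add: ij a_def b_def \<mu>_def algebra_simps)
    moreover have "a i - a j = (q + \<eta> *\<^sub>R v) - (q' + \<eta> *\<^sub>R v')"
      by (simp add: ij a_def)
    ultimately show ?thesis
      using norm_reflection_le_iff_comonotone[OF assms(2), of q v q' v'] comonotoneD[OF co ij(3,4)] by simp
  qed
  then obtain y where y: "\<And>i. i \<in> I \<Longrightarrow> norm (y - b i) \<le> norm (x - a i)"
    using kirszbraun_extension_point by metis
  define w where "w = (1 / (2 * \<mu>)) *\<^sub>R (x - y)"
  define p where "p = x - \<eta> *\<^sub>R w"
  have x_eq: "x = p + \<eta> *\<^sub>R w" and y_eq: "y = p + \<eta> *\<^sub>R w - (2 * \<mu>) *\<^sub>R w"
    using assms(2) by (simp_all add: p_def w_def \<mu>_def)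
  have "w \<in> A p"
  proof (rule max_comonotone_memI[OF assms(1)])
    fix q v assume "v \<in> A q"
    then have "norm (y - b (q, v)) \<le> norm (x - a (q, v))"
      using y by (simp add: I_def)
    moreover have "y - b (q, v) = (p + \<eta> *\<^sub>R w) - (q + \<eta> *\<^sub>R v) - (2 * (\<rho> + \<eta>)) *\<^sub>R (w - v)"
      by (simp add: y_eq a_def b_def \<mu>_def algebra_simps)
    moreover have "x - a (q, v) = (p + \<eta> *\<^sub>R w) - (q + \<eta> *\<^sub>R v)"
      by (simp add: x_eq a_def)
    ultimately show "\<rho> * (norm (w - v))\<^sup>2 \<le> inner (p - q) (w - v)"
      using norm_reflection_le_iff_comonotone[OF assms(2), of p w q v] by simp
  qed
  with x_eq show ?thesis by blast
qed

lemma resolvent_yosida: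
  fixes A :: "'a::{real_inner,complete_space} \<Rightarrow> 'a set"
  assumes "max_comonotone \<rho> A" "0 < \<eta>" "0 < \<rho> + \<eta>"
  shows "yosida A \<eta> x \<in> A (resolvent A \<eta> x)" "x = resolvent A \<eta> x + \<eta> *\<^sub>R yosida A \<eta> x"
proof -
  have co: "comonotone \<rho> A"
    using assms(1) by (simp add: max_comonotone_def)
  have "\<exists>!p. \<exists>u\<in>A p. x = p + \<eta> *\<^sub>R u"
    using max_comonotone_resolvent_exists[OF assms(1,3)] comonotone_resolvent_unique(1)[OF co assms(3)]
    by metis
  then have "\<exists>u\<in>A (resolvent A \<eta> x). x = resolvent A \<eta> x + \<eta> *\<^sub>R u"
    unfolding resolvent_def by (rule theI')
  then obtain u where u: "u \<in> A (resolvent A \<eta> x)" "x = resolvent A \<eta> x + \<eta> *\<^sub>R u"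
    by blast
  then have "x - resolvent A \<eta> x = \<eta> *\<^sub>R u"
    by (simp add: algebra_simps)
  then have "yosida A \<eta> x = u"
    using assms(2) by (simp add: yosida_def)
  with u show "yosida A \<eta> x \<in> A (resolvent A \<eta> x)" "x = resolvent A \<eta> x + \<eta> *\<^sub>R yosida A \<eta> x"
    by simp_all
qed

lemma yosida_cocoercive:
  fixes A :: "'a::{real_inner,complete_space} \<Rightarrow> 'a set"
  assumes "max_comonotone \<rho> A" "0 < \<eta>" "0 < \<rho> + \<eta>"
  shows "cocoercive (\<rho> + \<eta>) (yosida A \<eta>)"
  unfolding cocoercive_def
proof (intro allI)
  fix x y
  note J = resolvent_yosida[OF assms]
  define d where "d = yosida A \<eta> x - yosida A \<eta> y"
  have co: "comonotone \<rho> A"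
    using assms(1) by (simp add: max_comonotone_def)
  have "x - y = (resolvent A \<eta> x - resolvent A \<eta> y) + \<eta> *\<^sub>R d"
    using J(2)[of x] J(2)[of y] by (simp add: d_def algebra_simps)
  then have "inner (x - y) d = inner (resolvent A \<eta> x - resolvent A \<eta> y) d + \<eta> * (norm d)\<^sup>2"
    by (simp add: inner_add_left power2_norm_eq_inner)
  moreover have "\<rho> * (norm d)\<^sup>2 \<le> inner (resolvent A \<eta> x - resolvent A \<eta> y) d"
    using comonotoneD[OF co J(1)[of x] J(1)[of y]] by (simp add: d_def)
  ultimately have "(\<rho> + \<eta>) * (norm d)\<^sup>2 \<le> inner (x - y) d"
    by (simp add: distrib_right)
  then show "(\<rho> + \<eta>) * (norm (yosida A \<eta> x - yosida A \<eta> y))\<^sup>2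
      \<le> inner (x - y) (yosida A \<eta> x - yosida A \<eta> y)"
    by (simp add: d_def)
qed

lemma yosida_eq_0_iff:
  fixes A :: "'a::{real_inner,complete_space} \<Rightarrow> 'a set"
  assumes "max_comonotone \<rho> A" "0 < \<eta>" "0 < \<rho> + \<eta>"
  shows "yosida A \<eta> l = 0 \<longleftrightarrow> l \<in> zer A"
proof
  note J = resolvent_yosida[OF assms, of l]
  show "yosida A \<eta> l = 0 \<Longrightarrow> l \<in> zer A"
    using J by (auto simp: zer_def)
  assume "l \<in> zer A"
  then have "0 \<in> A l"
    by (simp add: zer_def)
  moreover have "comonotone \<rho> A"
    using assms(1) by (simp add: max_comonotone_def)
  moreover have "resolvent A \<eta> l + \<eta> *\<^sub>R yosida A \<eta> l = l + \<eta> *\<^sub>R 0"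
    using J(2) by simp
  ultimately show "yosida A \<eta> l = 0"
    using comonotone_resolvent_unique(2)[of \<rho> A \<eta> "yosida A \<eta> l" "resolvent A \<eta> l" 0 l] assms(3) J(1)
    by blast
qed

text \<open>Instead of weak cluster points we use points lying in the closed convex hull of every
  tail of a subsequence; by Mazur's lemma every weak cluster point is of this kind, and
  halfspaces containing a tail contain them.\<close>

definition tail_hull :: "(nat \<Rightarrow> 'a::real_normed_vector) \<Rightarrow> nat set \<Rightarrow> nat \<Rightarrow> 'a set" where
  "tail_hull x S N = closure (convex hull (x ` {n\<in>S. N \<le> n}))"

lemma tail_hull_common_point_exists:
  fixes x :: "nat \<Rightarrow> 'a::{real_inner,complete_space}"
  assumes "bounded (range x)" "infinite S"
  shows "\<exists>l. \<forall>N. l \<in> tail_hull x S N"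
proof -
  define C where "C N = convex hull (x ` {n\<in>S. N \<le> n})" for N
  have "\<exists>l. \<forall>C'\<in>range C. l \<in> closure C'"
  proof (rule directed_convex_family_closure_Inter_nonempty)
    fix C' assume "C' \<in> range C"
    then obtain N where "C' = C N" by blast
    moreover obtain n where "n \<in> S" "N \<le> n"
      using \<open>infinite S\<close> infinite_nat_iff_unbounded_le by blast
    ultimately show "convex C' \<and> C' \<noteq> {}"
      by (auto simp: C_def convex_convex_hull)
  next
    have "\<Union>(range C) \<subseteq> convex hull (range x)"
      by (auto simp: C_def intro: hull_mono[THEN subsetD, rotated])
    then show "bounded (\<Union>(range C))"
      using bounded_convex_hull[OF assms(1)] bounded_subset by blast
  next
    fix C1 C2 assume "C1 \<in> range C" "C2 \<in> range C"
    then obtain N1 N2 where "C1 = C N1" "C2 = C N2" by blast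
    then show "\<exists>C3\<in>range C. C3 \<subseteq> C1 \<inter> C2"
      by (intro bexI[of _ "C (max N1 N2)"] rangeI) (auto simp: C_def intro!: hull_mono)
  qed auto
  then show ?thesis
    by (auto simp: tail_hull_def C_def)
qed

lemma tail_hull_inner_le:
  fixes x :: "nat \<Rightarrow> 'a::real_inner"
  assumes l: "\<And>N. l \<in> tail_hull x S N"
    and eventually_le: "\<And>e. 0 < e \<Longrightarrow> \<exists>N. \<forall>n\<in>S. N \<le> n \<longrightarrow> inner v (x n) \<le> c + e"
  shows "inner v l \<le> c"
proof (rule field_le_epsilon)
  fix e :: real assume "0 < e"
  then obtain N where N: "\<forall>n\<in>S. N \<le> n \<longrightarrow> inner v (x n) \<le> c + e"
    using eventually_le by blast
  define H where "H = {y. inner v y \<le> c + e}"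
  have "closed H" "convex H"
    unfolding H_def by (simp_all add: closed_halfspace_le convex_halfspace_le)
  moreover have "x ` {n\<in>S. N \<le> n} \<subseteq> H"
    using N by (auto simp: H_def)
  ultimately have "tail_hull x S N \<subseteq> H"
    unfolding tail_hull_def by (intro closure_minimal hull_minimal)
  then show "inner v l \<le> c + e"
    using l[of N] by (auto simp: H_def)
qed

lemma tail_hull_inner_eq_lim:
  fixes x :: "nat \<Rightarrow> 'a::real_inner"
  assumes l: "\<And>N. l \<in> tail_hull x S N"
    and lim: "(\<lambda>n. inner v (x n)) \<longlonglongrightarrow> c"
  shows "inner v l = c"
proof -
  have eventually_le: "\<exists>N. \<forall>n\<in>S. N \<le> n \<longrightarrow> inner w (x n) \<le> d + e"
    if "(\<lambda>n. inner w (x n)) \<longlonglongrightarrow> d" "0 < e" for w d e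
  proof -
    have "\<forall>\<^sub>F n in sequentially. inner w (x n) < d + e"
      using that by (intro order_tendstoD(2)) auto
    then obtain N where "\<forall>n\<ge>N. inner w (x n) < d + e"
      by (auto simp: eventually_sequentially)
    then show ?thesis
      by (auto intro!: exI[of _ N] less_imp_le)
  qed
  have "(\<lambda>n. inner (-v) (x n)) \<longlonglongrightarrow> -c"
    using tendsto_minus[OF lim] by simp
  then have "inner (-v) l \<le> -c"
    by (intro tail_hull_inner_le[OF l] eventually_le)
  moreover have "inner v l \<le> c"
    by (intro tail_hull_inner_le[OF l] eventually_le[OF lim])
  ultimately show ?thesis
    by simp
qed

lemma tail_hull_points_eq:
  fixes x :: "nat \<Rightarrow> 'a::real_inner"
  assumes l: "\<And>N. l \<in> tail_hull x S N" and l': "\<And>N. l' \<in> tail_hull x S' N"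
    and "convergent (\<lambda>n. (norm (x n - l))\<^sup>2)" "convergent (\<lambda>n. (norm (x n - l'))\<^sup>2)"
  shows "l = l'"
proof -
  obtain c c' where c: "(\<lambda>n. (norm (x n - l))\<^sup>2) \<longlonglongrightarrow> c" and c': "(\<lambda>n. (norm (x n - l'))\<^sup>2) \<longlonglongrightarrow> c'"
    using assms(3,4) by (auto simp: convergent_def)
  have eq: "inner (l - l') (x n) = ((norm (x n - l'))\<^sup>2 - (norm (x n - l))\<^sup>2 + (norm l)\<^sup>2 - (norm l')\<^sup>2) / 2" for n
    unfolding power2_norm_eq_inner by (simp add: inner_diff_left inner_diff_right inner_commute algebra_simps)
  have lim: "(\<lambda>n. inner (l - l') (x n)) \<longlonglongrightarrow> (c' - c + (norm l)\<^sup>2 - (norm l')\<^sup>2) / 2"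
    unfolding eq by (intro tendsto_divide tendsto_add tendsto_diff c c' tendsto_const) simp
  have "inner (l - l') l = inner (l - l') l'"
    using tail_hull_inner_eq_lim[OF l lim] tail_hull_inner_eq_lim[OF l' lim] by simp
  then have "inner (l - l') (l - l') = 0"
    by (simp add: inner_diff_right)
  then show ?thesis
    by simp
qed

lemma opial_weakly_converges:
  fixes x :: "nat \<Rightarrow> 'a::{real_inner,complete_space}"
  assumes "bounded (range x)"
    and dist_convergent: "\<And>p. p \<in> Z \<Longrightarrow> convergent (\<lambda>n. (norm (x n - p))\<^sup>2)"
    and tail_points: "\<And>S l. infinite S \<Longrightarrow> (\<And>N. l \<in> tail_hull x S N) \<Longrightarrow> l \<in> Z"
  shows "\<exists>l\<in>Z. weakly_converges x l"
proof -
  obtain l where l: "\<And>N. l \<in> tail_hull x UNIV N"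
    using tail_hull_common_point_exists[OF assms(1)] by blast
  have "l \<in> Z"
    using tail_points l by blast
  have "(\<lambda>n. inner (x n) y) \<longlonglongrightarrow> inner l y" for y
  proof (rule ccontr)
    assume "\<not> (\<lambda>n. inner (x n) y) \<longlonglongrightarrow> inner l y"
    then obtain e where "0 < e" and often: "\<forall>N. \<exists>n\<ge>N. e \<le> \<bar>inner y (x n) - inner y l\<bar>"
      unfolding lim_sequentially dist_real_def by (auto simp: inner_commute not_less)
    define S where "S v = {n. inner v l + e \<le> inner v (x n)}" for v
    have "infinite (S y \<union> S (-y))"
      unfolding infinite_nat_iff_unbounded_le
    proof
      fix N
      obtain n where "N \<le> n" "e \<le> \<bar>inner y (x n) - inner y l\<bar>"
        using often by blast
      then show "\<exists>n\<ge>N. n \<in> S y \<union> S (-y)"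
        by (auto simp: S_def abs_if split: if_splits)
    qed
    then obtain v where "infinite (S v)"
      by blast
    then obtain l' where l': "\<And>N. l' \<in> tail_hull x (S v) N"
      using tail_hull_common_point_exists[OF assms(1)] by blast
    then have "l' = l"
      using tail_hull_points_eq[OF l' l] tail_points \<open>infinite (S v)\<close> \<open>l \<in> Z\<close> dist_convergent by blast
    moreover have "inner (-v) l' \<le> - (inner v l + e)"
      by (rule tail_hull_inner_le[OF l']) (auto simp: S_def)
    ultimately show False
      using \<open>0 < e\<close> by simp
  qed
  then show ?thesis
    using \<open>l \<in> Z\<close> by (auto simp: weakly_converges_def)
qed

lemma minty_variational_inequality_zero:
  fixes B :: "'a::real_inner \<Rightarrow> 'a"
  assumes "continuous_on UNIV B" and vi: "\<And>y. inner (B y) (l - y) \<le> 0"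
  shows "B l = 0"
proof -
  define t where "t k = 1 / real (Suc k)" for k
  have t: "0 < t k" for k
    by (simp add: t_def)
  have le: "inner (B l) (B (l - t k *\<^sub>R B l)) \<le> 0" for k
  proof -
    have "t k * inner (B l) (B (l - t k *\<^sub>R B l)) \<le> t k * 0"
      using vi[of "l - t k *\<^sub>R B l"] by (simp add: inner_commute)
    then show ?thesis
      using mult_le_cancel_left_pos[OF t] by blast
  qed
  have "(\<lambda>k. l - t k *\<^sub>R B l) \<longlonglongrightarrow> l - 0 *\<^sub>R B l"
    unfolding t_def by (intro tendsto_intros LIMSEQ_inverse_real_of_nat[unfolded inverse_eq_divide])
  then have "(\<lambda>k. B (l - t k *\<^sub>R B l)) \<longlonglongrightarrow> B l"
    using assms(1) by (auto intro: continuous_on_tendsto_compose)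
  then have "(\<lambda>k. inner (B l) (B (l - t k *\<^sub>R B l))) \<longlonglongrightarrow> inner (B l) (B l)"
    by (intro tendsto_intros)
  then have "inner (B l) (B l) \<le> 0"
    using le by (intro LIMSEQ_le_const2) auto
  then show ?thesis
    using inner_ge_zero[of "B l"] by simp
qed

lemma tail_hull_point_zero:
  fixes B :: "'a::real_inner \<Rightarrow> 'a"
  assumes mono: "\<And>u v. 0 \<le> inner (u - v) (B u - B v)" and "continuous_on UNIV B"
    and "bounded (range z)" and zx: "(\<lambda>n. z n - x n) \<longlonglongrightarrow> 0" and Bz: "(\<lambda>n. B (z n)) \<longlonglongrightarrow> 0"
    and l: "\<And>N. l \<in> tail_hull x S N"
  shows "B l = 0"
proof (rule minty_variational_inequality_zero[OF assms(2)])
  fix y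
  obtain R where R: "\<And>n. norm (z n) \<le> R"
    using \<open>bounded (range z)\<close> by (auto simp: bounded_iff)
  define \<epsilon> where "\<epsilon> n = inner (z n - y) (B (z n)) - inner (z n - x n) (B y)" for n
  have le: "inner (B y) (x n) \<le> inner (B y) y + \<epsilon> n" for n
    using mono[of "z n" y] unfolding \<epsilon>_def
    by (simp add: inner_diff_left inner_diff_right inner_commute algebra_simps)
  have "(\<lambda>n. inner (z n - y) (B (z n))) \<longlonglongrightarrow> 0"
  proof (rule Lim_null_comparison)
    show "\<forall>\<^sub>F n in sequentially. norm (inner (z n - y) (B (z n))) \<le> (R + norm y) * norm (B (z n))"
    proof (intro always_eventually allI)
      fix n
      have "norm (inner (z n - y) (B (z n))) \<le> norm (z n - y) * norm (B (z n))"
        using Cauchy_Schwarz_ineq2 by simp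
      also have "\<dots> \<le> (R + norm y) * norm (B (z n))"
        using R[of n] norm_triangle_ineq4[of "z n" y] by (intro mult_right_mono) auto
      finally show "norm (inner (z n - y) (B (z n))) \<le> (R + norm y) * norm (B (z n))" .
    qed
    show "(\<lambda>n. (R + norm y) * norm (B (z n))) \<longlonglongrightarrow> 0"
      using tendsto_mult[OF tendsto_const tendsto_norm[OF Bz]] by simp
  qed
  moreover have "(\<lambda>n. inner (z n - x n) (B y)) \<longlonglongrightarrow> 0"
    using tendsto_inner[OF zx tendsto_const] by simp
  ultimately have "\<epsilon> \<longlonglongrightarrow> 0"
    unfolding \<epsilon>_def using tendsto_diff by fastforce
  have "inner (B y) l \<le> inner (B y) y"
  proof (rule tail_hull_inner_le[OF l])
    fix e :: real assume "0 < e"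
    then obtain N where "\<forall>n\<ge>N. \<epsilon> n < e"
      using order_tendstoD(2)[OF \<open>\<epsilon> \<longlonglongrightarrow> 0\<close>] by (auto simp: eventually_sequentially)
    then show "\<exists>N. \<forall>n\<in>S. N \<le> n \<longrightarrow> inner (B y) (x n) \<le> inner (B y) y + e"
      using le by (meson add_left_mono less_imp_le order_trans)
  qed
  then show "inner (B y) (l - y) \<le> 0"
    by (simp add: inner_diff_right)
qed

lemma summable_convergent_of_descent:
  fixes a b e :: "nat \<Rightarrow> real"
  assumes "summable e"
    and descent: "\<forall>\<^sub>F n in sequentially. 0 \<le> a n \<and> 0 \<le> b n \<and> 0 \<le> e n \<and> a (Suc n) + b n \<le> a n + e n"
  shows "summable b" "convergent a"
proof -
  obtain N where N: "\<And>n. N \<le> n \<Longrightarrow> 0 \<le> a n \<and> 0 \<le> b n \<and> 0 \<le> e n \<and> a (Suc n) + b n \<le> a n + e n"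
    using descent by (auto simp: eventually_sequentially)
  define E where "E n = (\<Sum>k<n. e (k + N))" for n
  have sum_le: "(\<Sum>k<n. b (k + N)) + a (n + N) \<le> a N + E n" for n
  proof (induction n)
    case (Suc n)
    then show ?case
      using N[of "n + N"] by (simp add: E_def)
  qed (simp add: E_def)
  have "summable (\<lambda>k. e (k + N))"
    using \<open>summable e\<close> by (simp add: summable_iff_shift)
  then have E_le: "E n \<le> (\<Sum>k. e (k + N))" for n
    using N unfolding E_def by (intro sum_le_suminf) auto
  have E_lim: "E \<longlonglongrightarrow> (\<Sum>k. e (k + N))"
    using summable_LIMSEQ[OF \<open>summable (\<lambda>k. e (k + N))\<close>] by (simp add: E_def[abs_def])
  have "(\<Sum>k<n. b (k + N)) \<le> a N + (\<Sum>k. e (k + N))" for n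
    using sum_le[of n] E_le[of n] N[of "n + N"] by linarith
  then have "summable (\<lambda>k. b (k + N))"
    using N by (intro summableI_nonneg_bounded) auto
  then show "summable b"
    by (simp add: summable_iff_shift)
  have dec: "decseq (\<lambda>n. a (n + N) - E n)"
  proof (rule decseq_SucI)
    fix n
    show "a (Suc n + N) - E (Suc n) \<le> a (n + N) - E n"
      using N[of "n + N"] by (auto simp: E_def)
  qed
  have bdd: "\<forall>n. - (\<Sum>k. e (k + N)) \<le> a (n + N) - E n"
  proof
    fix n
    show "- (\<Sum>k. e (k + N)) \<le> a (n + N) - E n"
      using N[of "n + N"] E_le[of n] by simp
  qed
  obtain L where "(\<lambda>n. a (n + N) - E n) \<longlonglongrightarrow> L"
    using decseq_convergent[OF dec bdd] by blast
  from tendsto_add[OF this E_lim] have "(\<lambda>n. a (n + N)) \<longlonglongrightarrow> L + (\<Sum>k. e (k + N))"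
    by simp
  then show "convergent a"
    using convergent_ignore_initial_segment convergent_def by blast
qed

lemma tendsto_0_if_summable_div_real:
  fixes a :: "nat \<Rightarrow> real"
  assumes "\<And>n. 0 \<le> a n" and "convergent a" and summable: "summable (\<lambda>n. a n / real n)"
  shows "a \<longlonglongrightarrow> 0"
proof -
  obtain L where L: "a \<longlonglongrightarrow> L"
    using \<open>convergent a\<close> by (auto simp: convergent_def)
  have "L \<le> 0"
  proof (rule ccontr)
    assume "\<not> L \<le> 0"
    then have "\<forall>\<^sub>F n in sequentially. L / 2 < a n"
      using L by (intro order_tendstoD(1)) auto
    then have "\<forall>\<^sub>F n in sequentially. norm ((L / 2) * inverse (real n)) \<le> a n / real n"
    proof eventually_elim
      case (elim n)
      then show ?case
        using \<open>\<not> L \<le> 0\<close> by (cases "n = 0") (auto simp: field_simps)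
    qed
    then have "summable (\<lambda>n. (L / 2) * inverse (real n))"
      by (rule summable_comparison_test_ev[OF _ summable])
    then have "summable (\<lambda>n. inverse (real n))"
      using \<open>\<not> L \<le> 0\<close> summable_cmult_iff[of "L / 2"] by simp
    then show False
      using not_summable_harmonic[where 'a=real] by simp
  qed
  moreover have "0 \<le> L"
    using L assms(1) by (intro LIMSEQ_le_const) auto
  ultimately show ?thesis
    using L by simp
qed

lemma scaled_inner_le_young:
  fixes u v :: "'a::real_inner"
  assumes "0 < e"
  shows "c * inner u v \<le> e * (norm v)\<^sup>2 + (c\<^sup>2 / (4 * e)) * (norm u)\<^sup>2"
proof -
  have "0 \<le> (norm ((2 * e) *\<^sub>R v - c *\<^sub>R u))\<^sup>2 / (4 * e)"
    using assms by simp
  also have "\<dots> = e * (norm v)\<^sup>2 - c * inner u v + (c\<^sup>2 / (4 * e)) * (norm u)\<^sup>2"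
    using assms unfolding power2_norm_eq_inner
    by (simp add: inner_diff_left inner_diff_right inner_commute field_simps power2_eq_square)
  finally show ?thesis
    by simp
qed

lemma smallo_inverse_if_tendsto_mult:
  fixes f :: "nat \<Rightarrow> real"
  assumes "(\<lambda>n. real n * f n) \<longlonglongrightarrow> 0"
  shows "f \<in> o(\<lambda>n. 1 / real n)"
proof (rule smalloI_tendsto)
  show "((\<lambda>n. f n / (1 / real n)) \<longlongrightarrow> 0) at_top"
    using assms by (simp add: mult.commute)
  show "\<forall>\<^sub>F n in at_top. 1 / real n \<noteq> 0"
    using eventually_gt_at_top[of 0] by eventually_elim simp
qed

lemma tendsto_half_scaled_shift_sq_diff:
  assumes "0 < k"
  shows "((\<lambda>n. ((1/2) * ((k * (real n + 1) * (real n - a) / real n)\<^sup>2 - k\<^sup>2 * (real n)\<^sup>2) + c) / real n)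
    \<longlongrightarrow> k\<^sup>2 * (1 - a)) sequentially"
  using assms by (real_asymp simp: field_simps power2_eq_square)

lemma tendsto_half_shift_sq_diff:
  "((\<lambda>n. ((1/2) * (((real n + 1) * (real n - k) / real n)\<^sup>2 - (real n)\<^sup>2) * b\<^sup>2 + c) / real n)
    \<longlongrightarrow> (1 - k) * b\<^sup>2) sequentially"
  by (real_asymp simp: algebra_simps)

lemma eventually_le_linear_if_tendsto:
  fixes f :: "nat \<Rightarrow> real"
  assumes "((\<lambda>n. f n / real n) \<longlongrightarrow> L) sequentially" "L < M"
  shows "\<forall>\<^sub>F n in sequentially. f n \<le> M * real n"
proof -
  have "\<forall>\<^sub>F n in sequentially. f n / real n < M"
    using assms by (intro order_tendstoD(2)) auto
  moreover have "\<forall>\<^sub>F n in sequentially. 1 \<le> n"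
    by (rule eventually_ge_at_top)
  ultimately show ?thesis
    by eventually_elim (simp add: field_simps)
qed

lemma norm_add_sq_le:
  fixes u v :: "'a::real_inner"
  shows "(norm (u + v))\<^sup>2 \<le> 2 * (norm u)\<^sup>2 + 2 * (norm v)\<^sup>2"
proof -
  have "(norm (u + v))\<^sup>2 + (norm (u - v))\<^sup>2 = 2 * (norm u)\<^sup>2 + 2 * (norm v)\<^sup>2"
    unfolding power2_norm_eq_inner
    by (simp add: inner_add_left inner_add_right inner_diff_left inner_diff_right inner_commute)
  then show ?thesis
    using zero_le_power2[of "norm (u - v)"] by linarith
qed

lemma sq_div_le_if_abs_le:
  fixes y K X t :: real
  assumes "\<bar>y\<bar> \<le> K * t" "0 < X" "0 < t"
  shows "y\<^sup>2 / (X * t) \<le> K\<^sup>2 / X * t"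
proof -
  have "y\<^sup>2 \<le> (K * t)\<^sup>2"
    using assms(1) power_mono[of "\<bar>y\<bar>" "K * t" 2] by simp
  then have "y\<^sup>2 / (X * t) \<le> (K * t)\<^sup>2 / (X * t)"
    using assms(2,3) by (intro divide_right_mono) auto
  also have "\<dots> = K\<^sup>2 / X * t"
    using assms(2,3) by (simp add: power2_eq_square)
  finally show ?thesis .
qed

lemma eventually_abs_le_linear_if_tendsto:
  fixes f :: "nat \<Rightarrow> real"
  assumes "((\<lambda>n. f n / real n) \<longlongrightarrow> L) sequentially"
  shows "\<forall>\<^sub>F n in sequentially. \<bar>f n\<bar> \<le> (\<bar>L\<bar> + 1) * real n"
proof -
  have "((\<lambda>n. - f n / real n) \<longlongrightarrow> - L) sequentially"
    using tendsto_minus[OF assms] by simp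
  then have "\<forall>\<^sub>F n in sequentially. - f n \<le> (\<bar>L\<bar> + 1) * real n"
    by (rule eventually_le_linear_if_tendsto) simp
  moreover have "\<forall>\<^sub>F n in sequentially. f n \<le> (\<bar>L\<bar> + 1) * real n"
    using assms by (rule eventually_le_linear_if_tendsto) simp
  ultimately show ?thesis
    by eventually_elim simp
qed

lemma tendsto_d_sq_coefficients:
  "((\<lambda>n. ((real n + 1)\<^sup>2 * (1 - a / real n)\<^sup>2 - (real n)\<^sup>2) / real n) \<longlongrightarrow> 2 * (1 - a)) sequentially"
  "((\<lambda>n. (2 * (real n + 1)\<^sup>2 * (1 - a / real n) * (b / real n)) / real n) \<longlongrightarrow> 2 * b) sequentially"
  by (real_asymp simp: algebra_simps)+

lemma tendsto_d_sq_coefficient3: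
  assumes "0 < b"
  shows "((\<lambda>n. ((real n + 1)\<^sup>2 * (b / real n)\<^sup>2) / real n) \<longlongrightarrow> 0) sequentially"
  using assms by real_asymp

lemma tendsto_0_if_real_mult_norm_tendsto_0:
  fixes f :: "nat \<Rightarrow> 'a::real_normed_vector"
  assumes "(\<lambda>n. real n * norm (f n)) \<longlonglongrightarrow> 0"
  shows "f \<longlonglongrightarrow> 0"
proof -
  have "\<forall>\<^sub>F n in sequentially. norm (f n) \<le> real n * norm (f n)"
    using eventually_ge_at_top[of 1]
  proof eventually_elim
    case (elim n)
    then show ?case
      using mult_right_mono[of 1 "real n" "norm (f n)"] by simp
  qed
  then show ?thesis
    using assms by (rule Lim_null_comparison)
qed

text \<open>The sequence \<open>d\<close> stands for \<open>d n = x n - x (n - 1)\<close>; it is a separate parameter because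
  the starting point \<open>x (-1)\<close> is not a value of \<open>x\<close>.\<close>

locale fast_scheme =
  fixes B :: "'a::{real_inner,complete_space} \<Rightarrow> 'a" and x d z :: "nat \<Rightarrow> 'a" and \<alpha> \<beta> \<gamma> \<mu> :: real
  assumes cocoercive: "cocoercive \<mu> B"
    and zero_exists: "\<exists>p. B p = 0"
    and mu: "0 < \<mu>" and beta: "0 < \<beta>" and alpha: "\<gamma> + 2 < \<alpha>" and gamma: "\<beta> / (2 * \<mu>) < \<gamma>"
    and d_Suc: "\<And>n. d (Suc n) = x (Suc n) - x n"
    and d_step: "\<And>n. 1 \<le> n \<Longrightarrow> d (Suc n) = (1 - \<alpha> / real n) *\<^sub>R d n - (\<beta> / real n) *\<^sub>R B (z n)"
    and z_eq: "\<And>n. z n = x n + (real n / \<gamma>) *\<^sub>R d n"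
begin

abbreviation g :: "nat \<Rightarrow> 'a" where
  "g n \<equiv> B (z n)"

definition kappa :: real where
  "kappa = \<alpha> - 1 - \<gamma>"

definition delta :: real where
  "delta = \<gamma> * \<mu> - \<beta> / 2"

lemma gamma_pos: "0 < \<gamma>"
  using gamma mu beta by (smt (verit) divide_pos_pos)

lemma kappa_gt_1: "1 < kappa"
  using alpha by (simp add: kappa_def)

lemma delta_pos: "0 < delta"
  using gamma mu by (simp add: delta_def field_simps)

lemma g_cocoercive: "\<mu> * (norm (B u - B v))\<^sup>2 \<le> inner (u - v) (B u - B v)"
  using cocoercive by (simp add: cocoercive_def)

definition energy :: "'a \<Rightarrow> nat \<Rightarrow> real" where
  "energy p n = (1/2) * (norm (\<gamma> *\<^sub>R (x n - p) + (real n - \<alpha>) *\<^sub>R d n))\<^sup>2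
     + (\<gamma> * kappa / 2) * (norm (x n - p))\<^sup>2"

lemma energy_nonneg: "0 \<le> energy p n"
  unfolding energy_def using gamma_pos kappa_gt_1 by simp

lemma energy_step_eq:
  assumes "1 \<le> n"
  defines "P \<equiv> (real n - kappa)\<^sup>2 + \<gamma> * kappa"
  shows "energy p (Suc n) - energy p n = - \<gamma> * \<beta> * inner (z n - p) (g n)
     + (\<beta> * real n - P * \<beta> * (real n - \<alpha>) / (real n)\<^sup>2) * inner (d n) (g n)
     + (P * \<beta>\<^sup>2 / (2 * (real n)\<^sup>2)) * (norm (g n))\<^sup>2
     + (1/2) * (real n - \<alpha>)\<^sup>2 * (P / (real n)\<^sup>2 - 1) * (norm (d n))\<^sup>2"
proof -
  define u where "u = x n - p"
  have xS: "x (Suc n) - p = u + d (Suc n)" and zn: "z n - p = u + (real n / \<gamma>) *\<^sub>R d n"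
    using d_Suc[of n] z_eq[of n] by (simp_all add: u_def)
  show ?thesis
    using assms(1) gamma_pos
    unfolding energy_def xS zn u_def[symmetric] P_def kappa_def d_step[OF assms(1)] power2_norm_eq_inner
    apply (simp add: inner_add_left inner_add_right inner_diff_left inner_diff_right inner_commute)
    apply (simp add: field_simps power2_eq_square)
    done
qed

lemma energy_descent:
  assumes "B p = 0"
  shows "\<forall>\<^sub>F n in sequentially. energy p (Suc n) + (kappa / 2) * real n * (norm (d n))\<^sup>2 \<le> energy p n"
proof -
  define P where "P n = (real n - kappa)\<^sup>2 + \<gamma> * kappa" for n
  define cX where "cX n = \<beta> * real n - P n * \<beta> * (real n - \<alpha>) / (real n)\<^sup>2" for n
  define cG where "cG n = P n * \<beta>\<^sup>2 / (2 * (real n)\<^sup>2)" for n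
  define cD where "cD n = (1/2) * (real n - \<alpha>)\<^sup>2 * (P n / (real n)\<^sup>2 - 1)" for n
  have \<beta>\<delta>: "0 < \<beta> * delta"
    using beta delta_pos by simp
  have "cX \<in> O(\<lambda>_. 1)"
    unfolding cX_def P_def by real_asymp
  then obtain K where K: "\<forall>\<^sub>F n in sequentially. norm (cX n) \<le> K * norm (1::real)"
    using landau_o.bigE by blast
  have "\<forall>\<^sub>F n in sequentially. cG n \<le> \<beta>\<^sup>2 / 2 + \<beta> * delta / 2"
    unfolding cG_def P_def using \<beta>\<delta> by real_asymp
  moreover have "\<forall>\<^sub>F n in sequentially. cD n \<le> - (3/4) * kappa * real n"
    unfolding cD_def P_def using kappa_gt_1 by real_asymp
  moreover have "\<forall>\<^sub>F n in sequentially. K\<^sup>2 / (4 * (\<beta> * delta / 2)) \<le> (kappa / 4) * real n"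
    using kappa_gt_1 by real_asymp
  moreover have "\<forall>\<^sub>F n in sequentially. 1 \<le> n"
    by (rule eventually_ge_at_top)
  ultimately show ?thesis
    using K
  proof eventually_elim
    case (elim n)
    define G where "G = (norm (g n))\<^sup>2"
    define D where "D = (norm (d n))\<^sup>2"
    define Y where "Y = (cX n)\<^sup>2 / (4 * (\<beta> * delta / 2))"
    have "(cX n)\<^sup>2 \<le> K\<^sup>2"
      using elim(5) power_mono[of "\<bar>cX n\<bar>" K 2] by simp
    then have "Y \<le> K\<^sup>2 / (4 * (\<beta> * delta / 2))"
      unfolding Y_def using \<beta>\<delta> by (intro divide_right_mono) auto
    then have "Y * D \<le> (kappa / 4) * real n * D"
      using elim(3) by (intro mult_right_mono) (auto simp: D_def)
    moreover have "cX n * inner (d n) (g n) \<le> (\<beta> * delta / 2) * G + Y * D"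
      unfolding G_def D_def Y_def using \<beta>\<delta> by (intro scaled_inner_le_young) simp
    moreover have "\<gamma> * \<beta> * (\<mu> * G) \<le> \<gamma> * \<beta> * inner (z n - p) (g n)"
      using g_cocoercive[of "z n" p] assms gamma_pos beta by (intro mult_left_mono) (auto simp: G_def)
    moreover have "cG n * G \<le> (\<beta>\<^sup>2 / 2 + \<beta> * delta / 2) * G"
      using elim(1) by (intro mult_right_mono) (auto simp: G_def)
    moreover have "cD n * D \<le> (- (3/4) * kappa * real n) * D"
      using elim(2) by (intro mult_right_mono) (auto simp: D_def)
    moreover have "energy p (Suc n) - energy p n
        = - \<gamma> * \<beta> * inner (z n - p) (g n) + cX n * inner (d n) (g n) + cG n * G + cD n * D"
      using energy_step_eq[OF elim(4), of p] by (simp add: cX_def cG_def cD_def P_def G_def D_def)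
    moreover have "\<gamma> * \<beta> * (\<mu> * G) = \<beta> * delta * G + \<beta>\<^sup>2 / 2 * G"
      by (simp add: delta_def algebra_simps power2_eq_square)
    ultimately have "energy p (Suc n) + (kappa / 2) * real n * D \<le> energy p n"
      by (simp add: algebra_simps)
    then show ?case
      by (simp add: D_def)
  qed
qed

lemma energy_summable_convergent:
  assumes "B p = 0"
  shows "summable (\<lambda>n. real n * (norm (d n))\<^sup>2)" "convergent (energy p)"
proof -
  have "\<forall>\<^sub>F n in sequentially. 0 \<le> energy p n \<and> 0 \<le> kappa / 2 * (real n * (norm (d n))\<^sup>2) \<and> 0 \<le> (0::real)
      \<and> energy p (Suc n) + kappa / 2 * (real n * (norm (d n))\<^sup>2) \<le> energy p n + 0"
    using energy_descent[OF assms]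
    by eventually_elim (use energy_nonneg kappa_gt_1 in \<open>auto simp: mult.assoc\<close>)
  note descent = summable_convergent_of_descent[OF summable_zero this]
  show "summable (\<lambda>n. real n * (norm (d n))\<^sup>2)"
    using descent(1) kappa_gt_1 summable_cmult_iff[of "kappa / 2"] by simp
  show "convergent (energy p)"
    by (rule descent(2))
qed

lemma summable_d: "summable (\<lambda>n. real n * (norm (d n))\<^sup>2)"
  using zero_exists energy_summable_convergent(1) by blast

lemma x_bounded: "bounded (range x)"
proof -
  obtain p where "B p = 0"
    using zero_exists by blast
  then have "Bseq (energy p)"
    using energy_summable_convergent(2) convergent_imp_Bseq by blast
  then obtain K where K: "\<And>n. norm (energy p n) \<le> K"
    unfolding Bseq_def by blast
  have "norm (x n - p) \<le> sqrt (K / (\<gamma> * kappa / 2))" for n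
  proof -
    have "(\<gamma> * kappa / 2) * (norm (x n - p))\<^sup>2 \<le> energy p n"
      unfolding energy_def by simp
    also have "\<dots> \<le> K"
      using K[of n] by (auto intro: order_trans[OF abs_ge_self])
    finally have "(\<gamma> * kappa / 2) * (norm (x n - p))\<^sup>2 \<le> K" .
    then show ?thesis
      using gamma_pos kappa_gt_1 by (simp add: real_le_rsqrt field_simps)
  qed
  then have "norm (x n) \<le> norm p + sqrt (K / (\<gamma> * kappa / 2))" for n
    using norm_triangle_sub[of "x n" p] by (meson add_left_mono order_trans)
  then show ?thesis
    unfolding bounded_iff by blast
qed

definition operator_energy :: "nat \<Rightarrow> real" where
  "operator_energy n = (1/2) * (real n)\<^sup>2 * (norm (\<beta> *\<^sub>R g n + kappa *\<^sub>R d n))\<^sup>2"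

lemma operator_energy_nonneg: "0 \<le> operator_energy n"
  by (simp add: operator_energy_def)

lemma operator_energy_step_eq:
  assumes "1 \<le> n"
  defines "a \<equiv> (real n + 1) * (real n - kappa) / real n"
    and "b \<equiv> kappa * (real n + 1) * (real n - \<alpha>) / real n"
    and "h \<equiv> g (Suc n) - g n"
  shows "operator_energy (Suc n) - operator_energy n
      + \<beta> * (real n + 1)\<^sup>2 * (\<gamma> * inner (z (Suc n) - z n) h - \<gamma> * \<mu> * (norm h)\<^sup>2)
    = (1/2) * (a\<^sup>2 - (real n)\<^sup>2) * \<beta>\<^sup>2 * (norm (g n))\<^sup>2
      + (a * b - kappa * (real n)\<^sup>2) * \<beta> * inner (g n) (d n)
      + (1/2) * (b\<^sup>2 - kappa\<^sup>2 * (real n)\<^sup>2) * (norm (d n))\<^sup>2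
      - \<beta> * (real n + 1)\<^sup>2 * delta * (norm h)\<^sup>2
      - (\<alpha> * \<beta> * (real n + 1)\<^sup>2 / real n) * (\<alpha> * inner h (d n) + \<beta> * inner h (g n))"
proof -
  have gS: "g (Suc n) = g n + h"
    by (simp add: h_def)
  have xS: "x (Suc n) = x n + d (Suc n)"
    using d_Suc[of n] by simp
  have zS: "z (Suc n) - z n = d (Suc n) + ((real n + 1) / \<gamma>) *\<^sub>R d (Suc n) - (real n / \<gamma>) *\<^sub>R d n"
    by (simp add: z_eq[of "Suc n"] z_eq[of n] xS algebra_simps)
  show ?thesis
    using assms(1) gamma_pos
    unfolding operator_energy_def gS zS d_step[OF assms(1)] a_def b_def kappa_def delta_def
      power2_norm_eq_inner
    apply (simp add: inner_add_left inner_add_right inner_diff_left inner_diff_right inner_commute)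
    apply (simp add: field_simps power2_eq_square)
    done
qed

lemma operator_energy_step_le:
  assumes "1 \<le> n"
  defines "a \<equiv> (real n + 1) * (real n - kappa) / real n"
    and "b \<equiv> kappa * (real n + 1) * (real n - \<alpha>) / real n"
    and "c \<equiv> (\<alpha>\<^sup>2 * \<beta> / (2 * delta)) * ((real n + 1)\<^sup>2 / (real n)\<^sup>2)"
  shows "operator_energy (Suc n) - operator_energy n
    \<le> ((1/2) * (a\<^sup>2 - (real n)\<^sup>2) * \<beta>\<^sup>2 + 2 * \<beta>\<^sup>2 * c + (kappa - 1) * \<beta>\<^sup>2 * real n / 4) * (norm (g n))\<^sup>2
      + ((1/2) * (b\<^sup>2 - kappa\<^sup>2 * (real n)\<^sup>2) + 2 * \<alpha>\<^sup>2 * c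
          + ((a * b - kappa * (real n)\<^sup>2) * \<beta>)\<^sup>2 / ((kappa - 1) * \<beta>\<^sup>2 * real n)) * (norm (d n))\<^sup>2
      - (\<beta> * delta / 2) * (real n + 1)\<^sup>2 * (norm (g (Suc n) - g n))\<^sup>2"
proof -
  define cx where "cx = (a * b - kappa * (real n)\<^sup>2) * \<beta>"
  define h where "h = g (Suc n) - g n"
  define G where "G = (norm (g n))\<^sup>2"
  define D where "D = (norm (d n))\<^sup>2"
  define H where "H = (norm h)\<^sup>2"
  define S where "S = (norm (\<alpha> *\<^sub>R d n + \<beta> *\<^sub>R g n))\<^sup>2"
  define t where "t = \<alpha> * \<beta> * (real n + 1)\<^sup>2 / real n"
  define e where "e = \<beta> * (real n + 1)\<^sup>2 * delta / 2"
  define e' where "e' = (kappa - 1) * \<beta>\<^sup>2 * real n / 4"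
  have pos: "0 < e" "0 < e'" "0 < real n"
    using beta delta_pos kappa_gt_1 assms(1) by (simp_all add: e_def e'_def)
  define A where "A = (1/2) * (a\<^sup>2 - (real n)\<^sup>2) * \<beta>\<^sup>2"
  define A' where "A' = (1/2) * (b\<^sup>2 - kappa\<^sup>2 * (real n)\<^sup>2)"
  define Y where "Y = cx\<^sup>2 / ((kappa - 1) * \<beta>\<^sup>2 * real n)"
  have "\<gamma> * (\<mu> * H) \<le> \<gamma> * inner (z (Suc n) - z n) h"
    using g_cocoercive[of "z (Suc n)" "z n"] gamma_pos by (intro mult_left_mono) (simp_all add: h_def H_def)
  then have Q: "0 \<le> \<beta> * (real n + 1)\<^sup>2 * (\<gamma> * inner (z (Suc n) - z n) h - \<gamma> * \<mu> * H)"
    using beta by (intro mult_nonneg_nonneg) (simp_all add: algebra_simps)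
  have tc: "t\<^sup>2 / (4 * e) = c"
  proof -
    define q where "q = (real n + 1)\<^sup>2"
    define N where "N = (real n)\<^sup>2"
    have "t\<^sup>2 = (\<alpha> * \<beta>)\<^sup>2 * q\<^sup>2 / N"
      by (simp add: t_def q_def N_def power_divide power_mult_distrib)
    also have "\<dots> = c * (4 * e)"
    proof -
      have e_eq: "e = \<beta> * q * delta / 2" and c_eq: "c = (\<alpha>\<^sup>2 * \<beta> / (2 * delta)) * (q / N)"
        by (simp_all add: e_def c_def q_def N_def)
      have "0 < N"
        using pos(3) by (simp add: N_def)
      then show ?thesis
        unfolding e_eq c_eq using delta_pos by (simp add: field_simps power2_eq_square)
    qed
    finally show ?thesis
      using pos(1) by simp
  qed
  have "S \<le> 2 * \<alpha>\<^sup>2 * D + 2 * \<beta>\<^sup>2 * G"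
    using norm_add_sq_le[of "\<alpha> *\<^sub>R d n" "\<beta> *\<^sub>R g n"] by (simp add: S_def D_def G_def power_mult_distrib)
  moreover have "0 \<le> c"
    using beta delta_pos by (simp add: c_def)
  ultimately have "c * S \<le> c * (2 * \<alpha>\<^sup>2 * D + 2 * \<beta>\<^sup>2 * G)"
    by (rule mult_left_mono)
  moreover have "t * inner (- (\<alpha> *\<^sub>R d n + \<beta> *\<^sub>R g n)) h \<le> e * H + (t\<^sup>2 / (4 * e)) * S"
    using scaled_inner_le_young[OF pos(1), of t "- (\<alpha> *\<^sub>R d n + \<beta> *\<^sub>R g n)" h]
    by (simp only: H_def S_def norm_minus_cancel)
  ultimately have T: "t * inner (- (\<alpha> *\<^sub>R d n + \<beta> *\<^sub>R g n)) h \<le> e * H + c * (2 * \<alpha>\<^sup>2 * D + 2 * \<beta>\<^sup>2 * G)"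
    unfolding tc by linarith
  have "cx * inner (g n) (d n) \<le> e' * G + (cx\<^sup>2 / (4 * e')) * D"
    unfolding G_def D_def using pos by (subst inner_commute) (intro scaled_inner_le_young)
  then have X: "cx * inner (g n) (d n) \<le> e' * G + Y * D"
    by (simp add: Y_def e'_def)
  have "operator_energy (Suc n) - operator_energy n
        + \<beta> * (real n + 1)\<^sup>2 * (\<gamma> * inner (z (Suc n) - z n) h - \<gamma> * \<mu> * H)
      = A * G + cx * inner (g n) (d n) + A' * D - 2 * e * H + t * inner (- (\<alpha> *\<^sub>R d n + \<beta> *\<^sub>R g n)) h"
    using operator_energy_step_eq[OF assms(1)]
    by (simp add: A_def A'_def a_def b_def t_def e_def cx_def h_def G_def D_def H_def inner_commute algebra_simps)
  then have "operator_energy (Suc n) - operator_energy n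
      \<le> A * G + (e' * G + Y * D) + A' * D - 2 * e * H + (e * H + c * (2 * \<alpha>\<^sup>2 * D + 2 * \<beta>\<^sup>2 * G))"
    using Q T X by linarith
  then show ?thesis
    unfolding A_def A'_def Y_def cx_def[symmetric] e_def e'_def G_def D_def H_def h_def
    by (simp add: algebra_simps)
qed

lemma operator_energy_descent:
  obtains K where "\<forall>\<^sub>F n in sequentially.
      operator_energy (Suc n) + (\<beta> * delta / 2) * (real n + 1)\<^sup>2 * (norm (g (Suc n) - g n))\<^sup>2
        + ((kappa - 1) * \<beta>\<^sup>2 * real n / 2) * (norm (g n))\<^sup>2
      \<le> operator_energy n + K * real n * (norm (d n))\<^sup>2"
proof -
  define a where "a n = (real n + 1) * (real n - kappa) / real n" for n
  define b where "b n = kappa * (real n + 1) * (real n - \<alpha>) / real n" for n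
  define c where "c n = (\<alpha>\<^sup>2 * \<beta> / (2 * delta)) * ((real n + 1)\<^sup>2 / (real n)\<^sup>2)" for n
  define cx where "cx n = (a n * b n - kappa * (real n)\<^sup>2) * \<beta>" for n
  define K1 where "K1 = kappa\<^sup>2 * (1 - \<alpha>) + 1"
  define C where "C = 2 * \<beta>\<^sup>2 * (2 * \<alpha>\<^sup>2 * \<beta> / delta)"
  have c_le: "c n \<le> 2 * \<alpha>\<^sup>2 * \<beta> / delta" if "1 \<le> n" for n
  proof -
    have "(real n + 1)\<^sup>2 \<le> (2 * real n)\<^sup>2"
      using that by (intro power_mono) auto
    then have "(real n + 1)\<^sup>2 / (real n)\<^sup>2 \<le> 4"
      using that by (simp add: field_simps)
    then have "(\<alpha>\<^sup>2 * \<beta> / (2 * delta)) * ((real n + 1)\<^sup>2 / (real n)\<^sup>2) \<le> (\<alpha>\<^sup>2 * \<beta> / (2 * delta)) * 4"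
      using beta delta_pos by (intro mult_left_mono) auto
    then show ?thesis
      by (simp add: c_def mult_ac)
  qed
  have "\<forall>\<^sub>F n in sequentially.
      (1/2) * ((b n)\<^sup>2 - kappa\<^sup>2 * (real n)\<^sup>2) + 2 * \<alpha>\<^sup>2 * (2 * \<alpha>\<^sup>2 * \<beta> / delta) \<le> K1 * real n"
    unfolding K1_def b_def using kappa_gt_1
    by (intro eventually_le_linear_if_tendsto[OF tendsto_half_scaled_shift_sq_diff]) simp_all
  then have K1: "\<forall>\<^sub>F n in sequentially. (1/2) * ((b n)\<^sup>2 - kappa\<^sup>2 * (real n)\<^sup>2) + 2 * \<alpha>\<^sup>2 * c n \<le> K1 * real n"
    using eventually_ge_at_top[of 1]
  proof eventually_elim
    case (elim n)
    have "2 * \<alpha>\<^sup>2 * c n \<le> 2 * \<alpha>\<^sup>2 * (2 * \<alpha>\<^sup>2 * \<beta> / delta)"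
      using c_le[OF elim(2)] by (intro mult_left_mono) auto
    then show ?case
      using elim(1) by linarith
  qed
  have "cx \<in> O(\<lambda>n. real n)"
    unfolding cx_def a_def b_def by real_asymp
  then obtain K2 where K2: "\<forall>\<^sub>F n in sequentially. norm (cx n) \<le> K2 * norm (real n)"
    using landau_o.bigE by blast
  have "(1 - kappa) * \<beta>\<^sup>2 < - (3/4) * ((kappa - 1) * \<beta>\<^sup>2)"
    using kappa_gt_1 beta by (simp add: algebra_simps)
  then have "\<forall>\<^sub>F n in sequentially. (1/2) * ((a n)\<^sup>2 - (real n)\<^sup>2) * \<beta>\<^sup>2 + C
      \<le> - (3/4) * ((kappa - 1) * \<beta>\<^sup>2) * real n"
    unfolding a_def by (rule eventually_le_linear_if_tendsto[OF tendsto_half_shift_sq_diff])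
  moreover have "\<forall>\<^sub>F n in sequentially. 1 \<le> n"
    by (rule eventually_ge_at_top)
  ultimately have "\<forall>\<^sub>F n in sequentially. (1/2) * ((a n)\<^sup>2 - (real n)\<^sup>2) * \<beta>\<^sup>2 + 2 * \<beta>\<^sup>2 * c n
      \<le> - (3/4) * ((kappa - 1) * \<beta>\<^sup>2) * real n"
  proof eventually_elim
    case (elim n)
    have "2 * \<beta>\<^sup>2 * c n \<le> C"
      unfolding C_def using c_le[OF elim(2)] by (intro mult_left_mono) auto
    then show ?case
      using elim(1) by linarith
  qed
  moreover have "\<forall>\<^sub>F n in sequentially. 1 \<le> n"
    by (rule eventually_ge_at_top)
  ultimately have "\<forall>\<^sub>F n in sequentially.
      operator_energy (Suc n) + (\<beta> * delta / 2) * (real n + 1)\<^sup>2 * (norm (g (Suc n) - g n))\<^sup>2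
        + ((kappa - 1) * \<beta>\<^sup>2 * real n / 2) * (norm (g n))\<^sup>2
      \<le> operator_energy n + (K1 + K2\<^sup>2 / ((kappa - 1) * \<beta>\<^sup>2)) * real n * (norm (d n))\<^sup>2"
    using K1 K2
  proof eventually_elim
    case (elim n)
    define M where "M = (kappa - 1) * \<beta>\<^sup>2 * real n"
    define P where "P = (1/2) * ((a n)\<^sup>2 - (real n)\<^sup>2) * \<beta>\<^sup>2 + 2 * \<beta>\<^sup>2 * c n"
    define Q where "Q = (1/2) * ((b n)\<^sup>2 - kappa\<^sup>2 * (real n)\<^sup>2) + 2 * \<alpha>\<^sup>2 * c n
      + (cx n)\<^sup>2 / ((kappa - 1) * \<beta>\<^sup>2 * real n)"
    define R where "R = (K1 + K2\<^sup>2 / ((kappa - 1) * \<beta>\<^sup>2)) * real n"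
    define E where "E = (\<beta> * delta / 2) * (real n + 1)\<^sup>2"
    have "(cx n)\<^sup>2 / ((kappa - 1) * \<beta>\<^sup>2 * real n) \<le> K2\<^sup>2 / ((kappa - 1) * \<beta>\<^sup>2) * real n"
      using elim(2,4) kappa_gt_1 beta by (intro sq_div_le_if_abs_le) auto
    then have "Q \<le> R"
      using elim(3) by (simp add: Q_def R_def algebra_simps)
    then have "Q * (norm (d n))\<^sup>2 \<le> R * (norm (d n))\<^sup>2"
      by (rule mult_right_mono) simp
    moreover have "P \<le> - (3/4) * M"
      using elim(1) by (simp add: P_def M_def)
    then have "(P + M / 4) * (norm (g n))\<^sup>2 \<le> - (M / 2 * (norm (g n))\<^sup>2)"
      using mult_right_mono[of "P + M / 4" "- (M / 2)" "(norm (g n))\<^sup>2"] by simp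
    moreover have "operator_energy (Suc n) - operator_energy n
        \<le> (P + M / 4) * (norm (g n))\<^sup>2 + Q * (norm (d n))\<^sup>2 - E * (norm (g (Suc n) - g n))\<^sup>2"
      using operator_energy_step_le[OF elim(2)]
      unfolding P_def Q_def E_def M_def a_def b_def c_def cx_def by (simp only: add.assoc)
    ultimately show ?case
      unfolding M_def[symmetric] R_def[symmetric] E_def[symmetric] by linarith
  qed
  then show ?thesis ..
qed

lemma operator_energy_summable_convergent:
  shows "summable (\<lambda>n. real n * (norm (g n))\<^sup>2)"
    and "summable (\<lambda>n. (real n + 1)\<^sup>2 * (norm (g (Suc n) - g n))\<^sup>2)"
    and "convergent operator_energy"
proof -
  obtain K where K: "\<forall>\<^sub>F n in sequentially.
      operator_energy (Suc n) + (\<beta> * delta / 2) * (real n + 1)\<^sup>2 * (norm (g (Suc n) - g n))\<^sup>2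
        + ((kappa - 1) * \<beta>\<^sup>2 * real n / 2) * (norm (g n))\<^sup>2
      \<le> operator_energy n + K * real n * (norm (d n))\<^sup>2"
    by (rule operator_energy_descent)
  define b where "b n = (\<beta> * delta / 2) * (real n + 1)\<^sup>2 * (norm (g (Suc n) - g n))\<^sup>2
    + ((kappa - 1) * \<beta>\<^sup>2 * real n / 2) * (norm (g n))\<^sup>2" for n
  have "0 < \<beta> * delta / 2" "0 < (kappa - 1) * \<beta>\<^sup>2 / 2"
    using beta delta_pos kappa_gt_1 by simp_all
  have "\<forall>\<^sub>F n in sequentially. 0 \<le> operator_energy n \<and> 0 \<le> b n \<and> 0 \<le> \<bar>K\<bar> * (real n * (norm (d n))\<^sup>2)
      \<and> operator_energy (Suc n) + b n \<le> operator_energy n + \<bar>K\<bar> * (real n * (norm (d n))\<^sup>2)"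
    using K
  proof eventually_elim
    case (elim n)
    have "K * real n * (norm (d n))\<^sup>2 \<le> \<bar>K\<bar> * (real n * (norm (d n))\<^sup>2)"
      by (simp add: mult.assoc mult_right_mono)
    moreover have "0 \<le> b n"
      unfolding b_def using \<open>0 < \<beta> * delta / 2\<close> kappa_gt_1 by (intro add_nonneg_nonneg) simp_all
    ultimately show ?case
      using elim operator_energy_nonneg by (simp add: b_def)
  qed
  note descent = summable_convergent_of_descent[OF summable_mult[OF summable_d] this]
  show "convergent operator_energy"
    by (rule descent(2))
  have "norm (((kappa - 1) * \<beta>\<^sup>2 / 2) * (real n * (norm (g n))\<^sup>2)) \<le> b n" for n
  proof -
    have "norm (((kappa - 1) * \<beta>\<^sup>2 / 2) * (real n * (norm (g n))\<^sup>2))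
        = ((kappa - 1) * \<beta>\<^sup>2 * real n / 2) * (norm (g n))\<^sup>2"
      using \<open>0 < (kappa - 1) * \<beta>\<^sup>2 / 2\<close> kappa_gt_1 by (simp add: abs_mult)
    also have "\<dots> \<le> b n"
      unfolding b_def using \<open>0 < \<beta> * delta / 2\<close> by simp
    finally show ?thesis .
  qed
  then have "summable (\<lambda>n. ((kappa - 1) * \<beta>\<^sup>2 / 2) * (real n * (norm (g n))\<^sup>2))"
    by (rule summable_comparison_test'[OF descent(1)])
  then show "summable (\<lambda>n. real n * (norm (g n))\<^sup>2)"
    using kappa_gt_1 beta by simp
  have "norm ((\<beta> * delta / 2) * ((real n + 1)\<^sup>2 * (norm (g (Suc n) - g n))\<^sup>2)) \<le> b n" for n
  proof -
    have "norm ((\<beta> * delta / 2) * ((real n + 1)\<^sup>2 * (norm (g (Suc n) - g n))\<^sup>2))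
        = (\<beta> * delta / 2) * (real n + 1)\<^sup>2 * (norm (g (Suc n) - g n))\<^sup>2"
      using beta delta_pos by (simp add: abs_mult)
    also have "\<dots> \<le> b n"
      unfolding b_def using \<open>0 < (kappa - 1) * \<beta>\<^sup>2 / 2\<close> by simp
    finally show ?thesis .
  qed
  then have "summable (\<lambda>n. (\<beta> * delta / 2) * ((real n + 1)\<^sup>2 * (norm (g (Suc n) - g n))\<^sup>2))"
    by (rule summable_comparison_test'[OF descent(1)])
  then show "summable (\<lambda>n. (real n + 1)\<^sup>2 * (norm (g (Suc n) - g n))\<^sup>2)"
    using beta delta_pos by simp
qed

lemma d_sq_step_eq:
  assumes "1 \<le> n"
  shows "(real (Suc n) * norm (d (Suc n)))\<^sup>2 - (real n * norm (d n))\<^sup>2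
    = ((real n + 1)\<^sup>2 * (1 - \<alpha> / real n)\<^sup>2 - (real n)\<^sup>2) * (norm (d n))\<^sup>2
      - (2 * (real n + 1)\<^sup>2 * (1 - \<alpha> / real n) * (\<beta> / real n)) * inner (d n) (g n)
      + ((real n + 1)\<^sup>2 * (\<beta> / real n)\<^sup>2) * (norm (g n))\<^sup>2"
  using assms unfolding d_step[OF assms] power_mult_distrib power2_norm_eq_inner
  apply (simp add: inner_diff_left inner_diff_right inner_commute)
  apply (simp add: field_simps power2_eq_square)
  done

lemma d_sq_growth:
  obtains K where "\<forall>\<^sub>F n in sequentially. (real (Suc n) * norm (d (Suc n)))\<^sup>2
    \<le> (real n * norm (d n))\<^sup>2 + K * (real n * (norm (d n))\<^sup>2 + real n * (norm (g n))\<^sup>2)"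
proof -
  define c1 where "c1 n = (real n + 1)\<^sup>2 * (1 - \<alpha> / real n)\<^sup>2 - (real n)\<^sup>2" for n
  define c2 where "c2 n = 2 * (real n + 1)\<^sup>2 * (1 - \<alpha> / real n) * (\<beta> / real n)" for n
  define c3 where "c3 n = (real n + 1)\<^sup>2 * (\<beta> / real n)\<^sup>2" for n
  define k where "k = \<bar>2 * (1 - \<alpha>)\<bar> + \<bar>2 * \<beta>\<bar> + 2"
  have "\<forall>\<^sub>F n in sequentially. \<bar>c1 n\<bar> \<le> k * real n \<and> \<bar>c2 n\<bar> \<le> k * real n \<and> \<bar>c3 n\<bar> \<le> k * real n"
    using eventually_abs_le_linear_if_tendsto[OF tendsto_d_sq_coefficients(1)[of \<alpha>]]
      eventually_abs_le_linear_if_tendsto[OF tendsto_d_sq_coefficients(2)[of \<alpha> \<beta>]]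
      eventually_abs_le_linear_if_tendsto[OF tendsto_d_sq_coefficient3[OF beta]]
  proof eventually_elim
    case (elim n)
    have "(\<bar>2 * (1 - \<alpha>)\<bar> + 1) * real n \<le> k * real n" "(\<bar>2 * \<beta>\<bar> + 1) * real n \<le> k * real n"
        "(\<bar>0\<bar> + 1) * real n \<le> k * real n"
      by (rule mult_right_mono; simp add: k_def)+
    with elim show ?case
      unfolding c1_def c2_def c3_def by linarith
  qed
  then have "\<forall>\<^sub>F n in sequentially. (real (Suc n) * norm (d (Suc n)))\<^sup>2
      \<le> (real n * norm (d n))\<^sup>2 + (2 * k) * (real n * (norm (d n))\<^sup>2 + real n * (norm (g n))\<^sup>2)"
    using eventually_ge_at_top[of 1]
  proof eventually_elim
    case (elim n)
    define D where "D = (norm (d n))\<^sup>2"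
    define G where "G = (norm (g n))\<^sup>2"
    have "norm (d n) * norm (g n) \<le> D + G"
      using sum_squares_bound[of "norm (d n)" "norm (g n)"]
        mult_nonneg_nonneg[OF norm_ge_zero[of "d n"] norm_ge_zero[of "g n"]]
      unfolding D_def G_def power2_eq_square mult.assoc by linarith
    have "- c2 n * inner (d n) (g n) \<le> \<bar>c2 n * inner (d n) (g n)\<bar>"
      by simp
    also have "\<dots> \<le> \<bar>c2 n\<bar> * (norm (d n) * norm (g n))"
      unfolding abs_mult using Cauchy_Schwarz_ineq2[of "d n" "g n"] by (intro mult_left_mono) auto
    also have "\<dots> \<le> \<bar>c2 n\<bar> * (D + G)"
      using \<open>norm (d n) * norm (g n) \<le> D + G\<close> by (intro mult_left_mono) auto
    also have "\<dots> \<le> (k * real n) * (D + G)"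
      using elim(1) by (intro mult_right_mono) (auto simp: D_def G_def)
    finally have "- c2 n * inner (d n) (g n) \<le> (k * real n) * (D + G)" .
    moreover have "c1 n * D \<le> (k * real n) * D" "c3 n * G \<le> (k * real n) * G"
      using elim(1) by (auto intro!: mult_right_mono simp: D_def G_def)
    moreover have "(real (Suc n) * norm (d (Suc n)))\<^sup>2 - (real n * norm (d n))\<^sup>2
        = c1 n * D - c2 n * inner (d n) (g n) + c3 n * G"
      using d_sq_step_eq[OF elim(2)] by (simp add: c1_def c2_def c3_def D_def G_def)
    ultimately show ?case
      unfolding D_def[symmetric] G_def[symmetric] by (simp add: algebra_simps)
  qed
  then show ?thesis ..
qed

lemma d_tendsto: "(\<lambda>n. real n * norm (d n)) \<longlonglongrightarrow> 0"
proof -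
  define a where "a n = (real n * norm (d n))\<^sup>2" for n
  obtain K where K: "\<forall>\<^sub>F n in sequentially.
      a (Suc n) \<le> a n + K * (real n * (norm (d n))\<^sup>2 + real n * (norm (g n))\<^sup>2)"
    using d_sq_growth unfolding a_def by blast
  have "\<forall>\<^sub>F n in sequentially. 0 \<le> a n \<and> 0 \<le> (0::real) \<and> 0 \<le> \<bar>K\<bar> * (real n * (norm (d n))\<^sup>2 + real n * (norm (g n))\<^sup>2)
      \<and> a (Suc n) + 0 \<le> a n + \<bar>K\<bar> * (real n * (norm (d n))\<^sup>2 + real n * (norm (g n))\<^sup>2)"
    using K
  proof eventually_elim
    case (elim n)
    have "K * (real n * (norm (d n))\<^sup>2 + real n * (norm (g n))\<^sup>2)
        \<le> \<bar>K\<bar> * (real n * (norm (d n))\<^sup>2 + real n * (norm (g n))\<^sup>2)"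
      by (intro mult_right_mono) auto
    with elim show ?case
      by (simp add: a_def)
  qed
  from summable_convergent_of_descent(2)[OF
      summable_mult[OF summable_add[OF summable_d operator_energy_summable_convergent(1)]] this]
  have "convergent a" .
  moreover have "a n / real n = real n * (norm (d n))\<^sup>2" for n
    by (cases "n = 0") (simp_all add: a_def power2_eq_square)
  then have "summable (\<lambda>n. a n / real n)"
    using summable_d by simp
  ultimately have "a \<longlonglongrightarrow> 0"
    by (intro tendsto_0_if_summable_div_real) (simp_all add: a_def)
  then have "(\<lambda>n. sqrt (a n)) \<longlonglongrightarrow> sqrt 0"
    by (rule tendsto_real_sqrt)
  then show ?thesis
    by (simp add: a_def)
qed

lemma g_tendsto: "(\<lambda>n. real n * norm (g n)) \<longlonglongrightarrow> 0"
proof -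
  have "operator_energy n / real n \<le> \<beta>\<^sup>2 * (real n * (norm (g n))\<^sup>2) + kappa\<^sup>2 * (real n * (norm (d n))\<^sup>2)" for n
  proof -
    have "(norm (\<beta> *\<^sub>R g n + kappa *\<^sub>R d n))\<^sup>2 \<le> 2 * (\<beta>\<^sup>2 * (norm (g n))\<^sup>2) + 2 * (kappa\<^sup>2 * (norm (d n))\<^sup>2)"
      using norm_add_sq_le[of "\<beta> *\<^sub>R g n" "kappa *\<^sub>R d n"] by (simp add: power_mult_distrib)
    then have "real n * (norm (\<beta> *\<^sub>R g n + kappa *\<^sub>R d n))\<^sup>2
        \<le> real n * (2 * (\<beta>\<^sup>2 * (norm (g n))\<^sup>2) + 2 * (kappa\<^sup>2 * (norm (d n))\<^sup>2))"
      by (rule mult_left_mono) simp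
    then show ?thesis
      by (cases "n = 0") (simp_all add: operator_energy_def power2_eq_square algebra_simps)
  qed
  then have "summable (\<lambda>n. operator_energy n / real n)"
    using operator_energy_nonneg
    by (intro summable_comparison_test'[OF summable_add[OF
          summable_mult[OF operator_energy_summable_convergent(1)] summable_mult[OF summable_d]]]) simp
  then have W: "operator_energy \<longlonglongrightarrow> 0"
    by (intro tendsto_0_if_summable_div_real operator_energy_nonneg operator_energy_summable_convergent(3))
  have le: "norm (real n * norm (g n)) \<le> (sqrt (2 * operator_energy n) + kappa * (real n * norm (d n))) / \<beta>" for n
  proof -
    have "real n * norm (\<beta> *\<^sub>R g n) \<le> real n * norm (\<beta> *\<^sub>R g n + kappa *\<^sub>R d n) + real n * norm (kappa *\<^sub>R d n)"
      using norm_triangle_sub[of "\<beta> *\<^sub>R g n" "- (kappa *\<^sub>R d n)"]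
      by (simp add: distrib_left[symmetric] mult_left_mono)
    moreover have "sqrt (2 * operator_energy n) = real n * norm (\<beta> *\<^sub>R g n + kappa *\<^sub>R d n)"
      by (simp add: operator_energy_def real_sqrt_mult)
    ultimately show ?thesis
      using beta kappa_gt_1 by (simp add: field_simps)
  qed
  have "(\<lambda>n. (sqrt (2 * operator_energy n) + kappa * (real n * norm (d n))) / \<beta>)
      \<longlonglongrightarrow> (sqrt (2 * 0) + kappa * 0) / \<beta>"
    using beta by (intro tendsto_intros W d_tendsto) simp
  then show ?thesis
    by (intro Lim_null_comparison[OF always_eventually[OF allI[OF le]]]) simp
qed

lemma summable_g_diff: "summable (\<lambda>n. (real n)\<^sup>2 * (norm (g n - g (n + 1)))\<^sup>2)"
proof (rule summable_comparison_test'[OF operator_energy_summable_convergent(2)])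
  fix n
  have "(real n)\<^sup>2 \<le> (real n + 1)\<^sup>2"
    by (intro power_mono) auto
  then show "norm ((real n)\<^sup>2 * (norm (g n - g (n + 1)))\<^sup>2) \<le> (real n + 1)\<^sup>2 * (norm (g (Suc n) - g n))\<^sup>2"
    by (simp add: norm_minus_commute mult_right_mono)
qed

lemma dist_convergent:
  assumes "B p = 0"
  shows "convergent (\<lambda>n. (norm (x n - p))\<^sup>2)"
proof -
  define w where "w n = (real n - \<alpha>) *\<^sub>R d n" for n
  define c where "c = (\<gamma>\<^sup>2 + \<gamma> * kappa) / 2"
  have "0 < c"
    using gamma_pos kappa_gt_1 by (simp add: c_def add_pos_pos)
  have w: "w \<longlonglongrightarrow> 0"
  proof -
    have "(\<lambda>n. real n *\<^sub>R d n - \<alpha> *\<^sub>R d n) \<longlonglongrightarrow> 0 - \<alpha> *\<^sub>R 0"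
    proof (intro tendsto_intros)
      show "(\<lambda>n. real n *\<^sub>R d n) \<longlonglongrightarrow> 0"
        by (rule tendsto_norm_zero_cancel) (use d_tendsto in simp)
      show "d \<longlonglongrightarrow> 0"
        using d_tendsto by (rule tendsto_0_if_real_mult_norm_tendsto_0)
    qed
    then show ?thesis
      by (simp add: w_def[abs_def] scaleR_diff_left)
  qed
  obtain R where R: "\<And>n. norm (x n) \<le> R"
    using x_bounded by (auto simp: bounded_iff)
  define C where "C = R + norm p"
  have C: "norm (x n - p) \<le> C" for n
    using R[of n] norm_triangle_ineq4[of "x n" p] by (simp add: C_def)
  have "(\<lambda>n. \<gamma> * inner (x n - p) (w n)) \<longlonglongrightarrow> 0"
  proof (rule Lim_null_comparison)
    have "norm (\<gamma> * inner (x n - p) (w n)) \<le> \<gamma> * C * norm (w n)" for n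
    proof -
      have "\<bar>inner (x n - p) (w n)\<bar> \<le> norm (x n - p) * norm (w n)"
        by (rule Cauchy_Schwarz_ineq2)
      also have "\<dots> \<le> C * norm (w n)"
        by (rule mult_right_mono[OF C]) simp
      finally show ?thesis
        using gamma_pos by (simp add: abs_mult mult.assoc mult_left_mono)
    qed
    then show "\<forall>\<^sub>F n in sequentially. norm (\<gamma> * inner (x n - p) (w n)) \<le> \<gamma> * C * norm (w n)"
      by simp
    show "(\<lambda>n. \<gamma> * C * norm (w n)) \<longlonglongrightarrow> 0"
      using tendsto_mult_right_zero[OF tendsto_norm_zero[OF w]] by simp
  qed
  moreover have "(\<lambda>n. (norm (w n))\<^sup>2) \<longlonglongrightarrow> 0"
    using tendsto_power[OF tendsto_norm_zero[OF w], of 2] by simp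
  then have "(\<lambda>n. (1/2) * (norm (w n))\<^sup>2) \<longlonglongrightarrow> 0"
    by (rule tendsto_mult_right_zero)
  moreover obtain L where "energy p \<longlonglongrightarrow> L"
    using energy_summable_convergent(2)[OF assms] by (auto simp: convergent_def)
  ultimately have "(\<lambda>n. (energy p n - \<gamma> * inner (x n - p) (w n) - (1/2) * (norm (w n))\<^sup>2) / c)
      \<longlonglongrightarrow> (L - 0 - 0) / c"
    using \<open>0 < c\<close> by (intro tendsto_intros) auto
  moreover have "energy p n = c * (norm (x n - p))\<^sup>2 + \<gamma> * inner (x n - p) (w n) + (1/2) * (norm (w n))\<^sup>2" for n
    unfolding energy_def c_def w_def power2_norm_eq_inner
    apply (simp add: inner_add_left inner_add_right inner_diff_left inner_diff_right inner_commute)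
    apply (simp add: field_simps power2_eq_square)
    done
  ultimately show ?thesis
    using \<open>0 < c\<close> by (auto simp: convergent_def)
qed

lemma weakly_convergent_to_zero: "\<exists>l. B l = 0 \<and> weakly_converges x l"
proof -
  have zx: "(\<lambda>n. z n - x n) \<longlonglongrightarrow> 0"
  proof (rule Lim_null_comparison)
    show "\<forall>\<^sub>F n in sequentially. norm (z n - x n) \<le> (real n * norm (d n)) / \<gamma>"
      using gamma_pos by (simp add: z_eq)
    show "(\<lambda>n. (real n * norm (d n)) / \<gamma>) \<longlonglongrightarrow> 0"
      using tendsto_divide[OF d_tendsto tendsto_const[of \<gamma>]] gamma_pos by simp
  qed
  have "bounded (range (\<lambda>n. x n + (z n - x n)))"
    using x_bounded convergent_imp_bounded[OF zx] by (rule bounded_plus_comp)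
  then have "bounded (range z)"
    by simp
  have "(\<lambda>n. g n) \<longlonglongrightarrow> 0"
    using g_tendsto by (rule tendsto_0_if_real_mult_norm_tendsto_0)
  have "\<exists>l\<in>{l. B l = 0}. weakly_converges x l"
  proof (rule opial_weakly_converges[OF x_bounded])
    show "convergent (\<lambda>n. (norm (x n - p))\<^sup>2)" if "p \<in> {l. B l = 0}" for p
      using dist_convergent that by simp
    show "l \<in> {l. B l = 0}" if "\<And>N. l \<in> tail_hull x S N" for S l
      using tail_hull_point_zero[OF cocoercive_monotone[OF cocoercive] cocoercive_continuous[OF cocoercive mu]
          \<open>bounded (range z)\<close> zx \<open>(\<lambda>n. g n) \<longlonglongrightarrow> 0\<close> that] mu
      by simp
  qed
  then show ?thesis
    by blast
qed

end

theorem mainTheorem4: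
  fixes A :: "'a::{real_inner, complete_space} \<Rightarrow> 'a set"
    and \<rho> \<eta> \<alpha> \<beta> \<gamma> :: real
    and x :: "int \<Rightarrow> 'a"
  assumes maxA: "max_comonotone \<rho> A"
    and zer_ne: "zer A \<noteq> {}"
    and eta: "\<eta> > max (-2 * \<rho>) 0"
    and beta: "\<beta> > 0"
    and alpha: "\<alpha> > \<gamma> + 2"
    and gamma: "\<gamma> > \<beta> / (2 * (\<rho> + \<eta>))"
    and iter: "\<And>n::nat. n \<ge> 1 \<Longrightarrow>
       x (int n + 1) =
         (x (int n) + (1 - \<alpha> / real n) *\<^sub>R (x (int n) - x (int n - 1)))
         - (\<beta> / real n) *\<^sub>R yosida A \<eta> (x (int n) + (real n / \<gamma>) *\<^sub>R (x (int n) - x (int n - 1)))"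
  defines "z \<equiv> (\<lambda>n::nat. x (int n) + (real n / \<gamma>) *\<^sub>R (x (int n) - x (int n - 1)))"
  shows "summable (\<lambda>n::nat. real n * (norm (x (int n) - x (int n - 1)))\<^sup>2)
       \<and> summable (\<lambda>n::nat. real n * (norm (yosida A \<eta> (z n)))\<^sup>2)
       \<and> summable (\<lambda>n::nat. (real n)\<^sup>2 * (norm (yosida A \<eta> (z n) - yosida A \<eta> (z (n + 1))))\<^sup>2)
       \<and> (\<lambda>n::nat. norm (x (int n) - x (int n - 1))) \<in> o[at_top](\<lambda>n. 1 / real n)
       \<and> (\<lambda>n::nat. norm (yosida A \<eta> (z n))) \<in> o[at_top](\<lambda>n. 1 / real n)
       \<and> (\<exists>l \<in> zer A. weakly_converges (\<lambda>n. x (int n)) l)"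
proof -
  have \<eta>: "0 < \<eta>" "0 < \<rho> + \<eta>"
    using eta by auto
  have scheme: "fast_scheme (yosida A \<eta>) (\<lambda>n. x (int n)) (\<lambda>n. x (int n) - x (int n - 1)) z \<alpha> \<beta> \<gamma> (\<rho> + \<eta>)"
  proof
    show "cocoercive (\<rho> + \<eta>) (yosida A \<eta>)"
      by (rule yosida_cocoercive[OF maxA \<eta>])
    show "\<exists>p. yosida A \<eta> p = 0"
      using zer_ne yosida_eq_0_iff[OF maxA \<eta>] by auto
    show "x (int (Suc n)) - x (int (Suc n) - 1) = x (int (Suc n)) - x (int n)" for n
      by simp
    show "1 \<le> n \<Longrightarrow> x (int (Suc n)) - x (int (Suc n) - 1)
        = (1 - \<alpha> / real n) *\<^sub>R (x (int n) - x (int n - 1)) - (\<beta> / real n) *\<^sub>R yosida A \<eta> (z n)" for n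
      using iter[of n] unfolding z_def by (simp add: add.commute)
    show "z n = x (int n) + (real n / \<gamma>) *\<^sub>R (x (int n) - x (int n - 1))" for n
      by (simp add: z_def)
  qed (use \<eta> beta alpha gamma in auto)
  show ?thesis
    using fast_scheme.summable_d[OF scheme] fast_scheme.operator_energy_summable_convergent(1)[OF scheme]
      fast_scheme.summable_g_diff[OF scheme]
      smallo_inverse_if_tendsto_mult[OF fast_scheme.d_tendsto[OF scheme]]
      smallo_inverse_if_tendsto_mult[OF fast_scheme.g_tendsto[OF scheme]]
      fast_scheme.weakly_convergent_to_zero[OF scheme] yosida_eq_0_iff[OF maxA \<eta>]
    by auto
qed

end
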